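(* Let $\mathfrak g$ be a nonsemisimple complex Lie algebra, $\mathfrak p$ a nonperfect ideal of $\mathfrak g$, and $\phi:\mathfrak p\to\mathbb C$ a Lie algebra homomorphism. Choose a totally ordered basis $\{y_j\}_{j\in J}$ of a complement of $\mathfrak p$ in $\mathfrak g^{\phi}$ and let $\mathbb C[y]\subseteq\mathcal U(\mathfrak g)$ be the span of the ordered monomials $y^\beta=y_{j_1}^{\beta_{j_1}}\cdots y_{j_n}^{\beta_{j_n}}$ ($j_1<\dots<j_n$, $\beta\in\mathbb Z_+^J$ finitely supported), with $\mathbb C[y]=\mathbb C$ if $J=\emptyset$. Then the space of quasi-Whittaker vectors of type $\phi$ in the universal quasi-Whittaker module satisfies $$W(\phi)_{\phi}=\mathbb C[y]\,w_{\phi}.$$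
   Context: All vector spaces and Lie algebras are over $\mathbb C$. A Lie algebra homomorphism $\phi:\mathfrak p\to\mathbb C$ is a linear map vanishing on $[\mathfrak p,\mathfrak p]$. For a $\mathfrak g$-module $V$, a vector $v\in V$ is a quasi-Whittaker vector of type $\phi$ if $pv=\phi(p)v$ for all $p\in\mathfrak p$; $V_\phi=\{v\in V: pv=\phi(p)v\ \forall p\in\mathfrak p\}$. Let $\mathbb C w_\phi$ be the one-dimensional $\mathfrak p$-module with $pw_\phi=\phi(p)w_\phi$, and $W(\phi)=\mathcal U(\mathfrak g)\otimes_{\mathcal U(\mathfrak p)}\mathbb C w_\phi$ (the universal quasi-Whittaker module of type $\phi$); $w_\phi$ denotes $1\otimes w_\phi$. The Whittaker annihilator of $\phi$ is $\mathfrak g^{\phi}=\{g\in\mathfrak g:\phi([g,p])=0\ \forall p\in\mathfrak p\}$; it is a subalgebra of $\mathfrak g$ containing $\mathfrak p$. *)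

theory Defs
  imports Complex_Main
begin

definition lie_algebra :: "(complex \<Rightarrow> 'g::ab_group_add \<Rightarrow> 'g) \<Rightarrow> ('g \<Rightarrow> 'g \<Rightarrow> 'g) \<Rightarrow> bool" where
  "lie_algebra smul br \<longleftrightarrow>
     vector_space smul \<and>
     (\<forall>x y z. br (x + y) z = br x z + br y z) \<and>
     (\<forall>x y z. br x (y + z) = br x y + br x z) \<and>
     (\<forall>c x y. br (smul c x) y = smul c (br x y)) \<and>
     (\<forall>c x y. br x (smul c y) = smul c (br x y)) \<and>
     (\<forall>x. br x x = 0) \<and>
     (\<forall>x y z. br x (br y z) + br y (br z x) + br z (br x y) = 0)"

definition bracket_span :: "(complex \<Rightarrow> 'g::ab_group_add \<Rightarrow> 'g) \<Rightarrow> ('g \<Rightarrow> 'g \<Rightarrow> 'g) \<Rightarrow> 'g set \<Rightarrow> 'g set \<Rightarrow> 'g set" where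
  "bracket_span smul br A B = module.span smul {br a b | a b. a \<in> A \<and> b \<in> B}"

definition lie_ideal :: "(complex \<Rightarrow> 'g::ab_group_add \<Rightarrow> 'g) \<Rightarrow> ('g \<Rightarrow> 'g \<Rightarrow> 'g) \<Rightarrow> 'g set \<Rightarrow> bool" where
  "lie_ideal smul br I \<longleftrightarrow> module.subspace smul I \<and> (\<forall>x p. p \<in> I \<longrightarrow> br x p \<in> I)"

fun derived_series :: "(complex \<Rightarrow> 'g::ab_group_add \<Rightarrow> 'g) \<Rightarrow> ('g \<Rightarrow> 'g \<Rightarrow> 'g) \<Rightarrow> 'g set \<Rightarrow> nat \<Rightarrow> 'g set" where
  "derived_series smul br I 0 = I"
| "derived_series smul br I (Suc k) =
     bracket_span smul br (derived_series smul br I k) (derived_series smul br I k)"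

definition solvable_ideal :: "(complex \<Rightarrow> 'g::ab_group_add \<Rightarrow> 'g) \<Rightarrow> ('g \<Rightarrow> 'g \<Rightarrow> 'g) \<Rightarrow> 'g set \<Rightarrow> bool" where
  "solvable_ideal smul br I \<longleftrightarrow> (\<exists>k. derived_series smul br I k = {0})"

definition semisimple :: "(complex \<Rightarrow> 'g::ab_group_add \<Rightarrow> 'g) \<Rightarrow> ('g \<Rightarrow> 'g \<Rightarrow> 'g) \<Rightarrow> bool" where
  "semisimple smul br \<longleftrightarrow>
     (\<exists>B. finite B \<and> module.span smul B = UNIV) \<and>
     (\<forall>I. lie_ideal smul br I \<and> solvable_ideal smul br I \<longrightarrow> I = {0})"

definition perfect :: "(complex \<Rightarrow> 'g::ab_group_add \<Rightarrow> 'g) \<Rightarrow> ('g \<Rightarrow> 'g \<Rightarrow> 'g) \<Rightarrow> 'g set \<Rightarrow> bool" where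
  "perfect smul br P \<longleftrightarrow> bracket_span smul br P P = P"

text \<open>Lie algebra homomorphism P \<rightarrow> C: linear on P and vanishing on brackets of P
(hence on [P,P]). Values of phi outside P are irrelevant.\<close>
definition lie_hom_to_C :: "(complex \<Rightarrow> 'g::ab_group_add \<Rightarrow> 'g) \<Rightarrow> ('g \<Rightarrow> 'g \<Rightarrow> 'g) \<Rightarrow> 'g set \<Rightarrow> ('g \<Rightarrow> complex) \<Rightarrow> bool" where
  "lie_hom_to_C smul br P phi \<longleftrightarrow>
     (\<forall>a\<in>P. \<forall>b\<in>P. phi (a + b) = phi a + phi b) \<and>
     (\<forall>c. \<forall>a\<in>P. phi (smul c a) = c * phi a) \<and>
     (\<forall>a\<in>P. \<forall>b\<in>P. phi (br a b) = 0)"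

definition whittaker_annihilator :: "('g \<Rightarrow> 'g \<Rightarrow> 'g) \<Rightarrow> 'g set \<Rightarrow> ('g \<Rightarrow> complex) \<Rightarrow> 'g set" where
  "whittaker_annihilator br P phi = {g. \<forall>p\<in>P. phi (br g p) = 0}"

text \<open>Elements: finitely supported functions from words ('g list) to C; the word u
corresponds to the noncommutative monomial u_1 u_2 ... u_n.\<close>

definition fin_supp :: "('g list \<Rightarrow> complex) \<Rightarrow> bool" where
  "fin_supp f \<longleftrightarrow> finite {w. f w \<noteq> 0}"

definition fmul :: "('g list \<Rightarrow> complex) \<Rightarrow> ('g list \<Rightarrow> complex) \<Rightarrow> ('g list \<Rightarrow> complex)" where
  "fmul f h = (\<lambda>w. \<Sum>k\<le>length w. f (take k w) * h (drop k w))"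

definition fword :: "'g list \<Rightarrow> ('g list \<Rightarrow> complex)" where
  "fword u = (\<lambda>w. if w = u then 1 else 0)"

definition fone :: "'g list \<Rightarrow> complex" where
  "fone = fword []"

definition fgen :: "'g \<Rightarrow> ('g list \<Rightarrow> complex)" where
  "fgen a = fword [a]"

text \<open>Defining relations of U(g) as a quotient of the free algebra on the set g:
linearity of the embedding and x y - y x = [x,y].\<close>
definition U_relations :: "(complex \<Rightarrow> 'g::ab_group_add \<Rightarrow> 'g) \<Rightarrow> ('g \<Rightarrow> 'g \<Rightarrow> 'g) \<Rightarrow> ('g list \<Rightarrow> complex) set" where
  "U_relations smul br =
     {(\<lambda>w. fgen (a + b) w - fgen a w - fgen b w) | a b. True} \<union>
     {(\<lambda>w. fgen (smul c a) w - c * fgen a w) | c a. True} \<union>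
     {(\<lambda>w. fmul (fgen a) (fgen b) w - fmul (fgen b) (fgen a) w - fgen (br a b) w) | a b. True}"

text \<open>Two-sided ideal of the free algebra generated by the relations; U(g) = F / U_ideal.\<close>
inductive_set U_ideal :: "(complex \<Rightarrow> 'g::ab_group_add \<Rightarrow> 'g) \<Rightarrow> ('g \<Rightarrow> 'g \<Rightarrow> 'g) \<Rightarrow> ('g list \<Rightarrow> complex) set"
  for smul br where
  gen: "r \<in> U_relations smul br \<Longrightarrow> r \<in> U_ideal smul br"
| zero: "(\<lambda>w. 0) \<in> U_ideal smul br"
| add: "x \<in> U_ideal smul br \<Longrightarrow> y \<in> U_ideal smul br \<Longrightarrow> (\<lambda>w. x w + y w) \<in> U_ideal smul br"
| scale: "x \<in> U_ideal smul br \<Longrightarrow> (\<lambda>w. c * x w) \<in> U_ideal smul br"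
| lmul: "x \<in> U_ideal smul br \<Longrightarrow> fin_supp f \<Longrightarrow> fmul f x \<in> U_ideal smul br"
| rmul: "x \<in> U_ideal smul br \<Longrightarrow> fin_supp f \<Longrightarrow> fmul x f \<in> U_ideal smul br"

text \<open>W(phi) = U(g) \<otimes>_U(p) C w_phi = U(g) / U(g){p - phi(p) : p \<in> P} = F / W_ideal,
where W_ideal is the left ideal of F generated by U_ideal and the elements p - phi(p).
The vector w_phi is the class of fone, and the class of f is f . w_phi.\<close>
inductive_set W_ideal :: "(complex \<Rightarrow> 'g::ab_group_add \<Rightarrow> 'g) \<Rightarrow> ('g \<Rightarrow> 'g \<Rightarrow> 'g) \<Rightarrow> 'g set \<Rightarrow> ('g \<Rightarrow> complex) \<Rightarrow> ('g list \<Rightarrow> complex) set"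
  for smul br P phi where
  uid: "x \<in> U_ideal smul br \<Longrightarrow> x \<in> W_ideal smul br P phi"
| gen: "p \<in> P \<Longrightarrow> (\<lambda>w. fgen p w - phi p * fone w) \<in> W_ideal smul br P phi"
| zero: "(\<lambda>w. 0) \<in> W_ideal smul br P phi"
| add: "x \<in> W_ideal smul br P phi \<Longrightarrow> y \<in> W_ideal smul br P phi \<Longrightarrow> (\<lambda>w. x w + y w) \<in> W_ideal smul br P phi"
| scale: "x \<in> W_ideal smul br P phi \<Longrightarrow> (\<lambda>w. c * x w) \<in> W_ideal smul br P phi"
| lmul: "x \<in> W_ideal smul br P phi \<Longrightarrow> fin_supp f \<Longrightarrow> fmul f x \<in> W_ideal smul br P phi"

text \<open>The class of f in W(phi) (represented by f, fin_supp f) is a quasi-Whittaker vector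
of type phi iff p.[f] = phi(p)[f] in W(phi) for all p \<in> P.\<close>
definition quasi_whittaker_rep :: "(complex \<Rightarrow> 'g::ab_group_add \<Rightarrow> 'g) \<Rightarrow> ('g \<Rightarrow> 'g \<Rightarrow> 'g) \<Rightarrow> 'g set \<Rightarrow> ('g \<Rightarrow> complex) \<Rightarrow> ('g list \<Rightarrow> complex) \<Rightarrow> bool" where
  "quasi_whittaker_rep smul br P phi f \<longleftrightarrow>
     (\<forall>p\<in>P. (\<lambda>w. fmul (fgen p) f w - phi p * f w) \<in> W_ideal smul br P phi)"

text \<open>C[y] \<subseteq> U(g) (at the level of the free algebra): span of the ordered monomials
y_{j_1} y_{j_2} ... y_{j_n} with j_1 \<le> ... \<le> j_n in J (the empty product is 1).\<close>
definition ordered_monomial_span :: "('j::linorder \<Rightarrow> 'g) \<Rightarrow> 'j set \<Rightarrow> ('g list \<Rightarrow> complex) set" where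
  "ordered_monomial_span y J =
     {f. \<exists>S c. finite S \<and> (\<forall>js\<in>S. sorted js \<and> set js \<subseteq> J) \<and>
             f = (\<lambda>w. \<Sum>js\<in>S. c js * fword (map y js) w)}"

end

theory Submission
  imports Defs
begin

text \<open>
  Modulo the defining relations of \<open>W(\<phi>)\<close>, every element is a combination of words
  \<open>x\<^sub>1 \<cdots> x\<^sub>k v w\<^sub>\<phi>\<close> with letters \<open>x\<^sub>i\<close> from a complement \<open>X\<close> of \<open>\<gg>\<^sup>\<phi>\<close> in \<open>\<gg>\<close> and a word \<open>v\<close>
  in the span of the \<open>y\<^sub>j\<close>; call \<open>k\<close> the \<open>X\<close>-degree. No nonzero \<open>x \<in> X\<close> lies in \<open>\<gg>\<^sup>\<phi>\<close>, so the
  pairing \<open>\<phi>([p, x])\<close> between \<open>P\<close> and \<open>X\<close> is nondegenerate in \<open>x\<close>, and finitely many letters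
  \<open>a\<close> from \<open>X\<close> admit \<open>x\<^sub>d \<in> X\<close>, \<open>p\<^sub>d \<in> P\<close> with \<open>a = \<Sum>\<^sub>d \<phi>([p\<^sub>d, a]) x\<^sub>d\<close>. The Euler operator
  \<open>\<Sum>\<^sub>d x\<^sub>d (p\<^sub>d - \<phi>(p\<^sub>d))\<close> multiplies a normal form of \<open>X\<close>-degree \<open>k\<close> by \<open>k\<close>, up to terms of lower
  \<open>X\<close>-degree, and it annihilates quasi-Whittaker vectors; so a quasi-Whittaker vector has a
  normal form of \<open>X\<close>-degree \<open>0\<close>. Words in the span of the \<open>y\<^sub>j\<close> are then sorted into ordered
  monomials, since brackets \<open>[y\<^sub>i, y\<^sub>j]\<close> lie in \<open>\<gg>\<^sup>\<phi> = span y + P\<close>. Conversely every \<open>y\<^sup>\<beta> w\<^sub>\<phi>\<close> is a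
  quasi-Whittaker vector because \<open>\<phi>([p, y\<^sub>j]) = 0\<close>.
\<close>

section \<open>The free algebra\<close>

lemma fmul_fword_left:
  "fmul (fword u) f =
     (\<lambda>w. if length u \<le> length w \<and> take (length u) w = u then f (drop (length u) w) else 0)"
proof (rule ext)
  fix w :: "'a list"
  have "fmul (fword u) f w =
      (\<Sum>k\<le>length w. if k = length u \<and> take (length u) w = u then f (drop (length u) w) else 0)"
    unfolding fmul_def fword_def by (rule sum.cong) auto
  then show "fmul (fword u) f w =
      (if length u \<le> length w \<and> take (length u) w = u then f (drop (length u) w) else 0)"
    by (simp add: sum.If_cases) (auto simp: Int_def)
qed

lemma fmul_fword_fword: "fmul (fword u) (fword v) = fword (u @ v)"
  unfolding fmul_fword_left by (rule ext) (auto simp: fword_def, metis append_take_drop_id)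

lemma fmul_diff_left: "fmul (\<lambda>w. f w - g w) h = (\<lambda>w. fmul f h w - fmul g h w)"
  unfolding fmul_def by (simp add: left_diff_distrib sum_subtractf)
lemma fmul_scale_left: "fmul (\<lambda>w. c * f w) h = (\<lambda>w. c * fmul f h w)"
  unfolding fmul_def by (simp add: sum_distrib_left mult.assoc)
lemma fmul_add_right: "fmul h (\<lambda>w. f w + g w) = (\<lambda>w. fmul h f w + fmul h g w)"
  unfolding fmul_def by (simp add: distrib_left sum.distrib)
lemma fmul_diff_right: "fmul h (\<lambda>w. f w - g w) = (\<lambda>w. fmul h f w - fmul h g w)"
  unfolding fmul_def by (simp add: right_diff_distrib sum_subtractf)
lemma fmul_scale_right: "fmul h (\<lambda>w. c * f w) = (\<lambda>w. c * fmul h f w)"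
  unfolding fmul_def by (simp add: sum_distrib_left mult.left_commute)
lemma fmul_zero_right: "fmul h (\<lambda>w. 0) = (\<lambda>w. 0)"
  unfolding fmul_def by simp
lemma fmul_sum_right: "fmul h (\<lambda>w. \<Sum>i\<in>I. f i w) = (\<lambda>w. \<Sum>i\<in>I. fmul h (f i) w)"
  unfolding fmul_def by (simp add: sum_distrib_left sum.swap[of _ I])

lemma fin_supp_fword [simp]: "fin_supp (fword u)"
  unfolding fin_supp_def fword_def by simp
lemma fin_supp_fgen [simp]: "fin_supp (fgen a)"
  unfolding fgen_def by simp

definition word_span :: "'g list set \<Rightarrow> ('g list \<Rightarrow> complex) set" where
  "word_span S = {f. fin_supp f \<and> (\<forall>w. f w \<noteq> 0 \<longrightarrow> w \<in> S)}"

lemma fin_supp_eq_sum_fword: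
  assumes "fin_supp f"
  shows "f = (\<lambda>w. \<Sum>v | f v \<noteq> 0. f v * fword v w)"
proof (rule ext)
  fix w
  have "(\<Sum>v | f v \<noteq> 0. f v * fword v w) = (\<Sum>v | f v \<noteq> 0. if v = w then f v else 0)"
    by (rule sum.cong) (auto simp: fword_def)
  also have "\<dots> = f w" using assms by (simp add: fin_supp_def sum.delta)
  finally show "f w = (\<Sum>v | f v \<noteq> 0. f v * fword v w)" by simp
qed

lemma word_span_induct [consumes 1, case_names zero add scale word]:
  assumes f: "f \<in> word_span S"
    and zero: "Q (\<lambda>w. 0)"
    and add: "\<And>f g. Q f \<Longrightarrow> Q g \<Longrightarrow> Q (\<lambda>w. f w + g w)"
    and scale: "\<And>f c. Q f \<Longrightarrow> Q (\<lambda>w. c * f w)"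
    and word: "\<And>u. u \<in> S \<Longrightarrow> Q (fword u)"
  shows "Q f"
proof -
  have supp: "finite {v. f v \<noteq> 0}" "{v. f v \<noteq> 0} \<subseteq> S"
    using f by (auto simp: word_span_def fin_supp_def)
  have "Q (\<lambda>w. \<Sum>v\<in>A. f v * fword v w)" if "finite A" "A \<subseteq> S" for A
    using that
  proof (induction A rule: finite_induct)
    case empty
    then show ?case using zero by simp
  next
    case (insert v A)
    then have "Q (\<lambda>w. f v * fword v w + (\<Sum>v\<in>A. f v * fword v w))"
      by (intro add scale word) auto
    then show ?case using insert by simp
  qed
  then have "Q (\<lambda>w. \<Sum>v | f v \<noteq> 0. f v * fword v w)"
    using supp by blast
  then show ?thesis
    using fin_supp_eq_sum_fword[of f] f by (simp add: word_span_def)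
qed

lemma word_span_zero: "(\<lambda>w. 0) \<in> word_span S"
  by (simp add: word_span_def fin_supp_def)
lemma word_span_add: "f \<in> word_span S \<Longrightarrow> g \<in> word_span S \<Longrightarrow> (\<lambda>w. f w + g w) \<in> word_span S"
  unfolding word_span_def fin_supp_def
  by (auto intro: finite_subset[of _ "{w. f w \<noteq> 0} \<union> {w. g w \<noteq> 0}"]) (metis add_0)
lemma word_span_scale: "f \<in> word_span S \<Longrightarrow> (\<lambda>w. c * f w) \<in> word_span S"
  unfolding word_span_def fin_supp_def by (auto intro: finite_subset[of _ "{w. f w \<noteq> 0}"])
lemma word_span_fword: "u \<in> S \<Longrightarrow> fword u \<in> word_span S"
  using fin_supp_fword[of u] by (auto simp: word_span_def fword_def)
lemma word_span_mono: "f \<in> word_span S \<Longrightarrow> S \<subseteq> T \<Longrightarrow> f \<in> word_span T"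
  by (auto simp: word_span_def)
lemma word_span_sum:
  "finite I \<Longrightarrow> (\<And>i. i \<in> I \<Longrightarrow> f i \<in> word_span S) \<Longrightarrow> (\<lambda>w. \<Sum>i\<in>I. f i w) \<in> word_span S"
  by (induction I rule: finite_induct) (auto intro: word_span_add word_span_zero)

lemma word_span_fmul_fword:
  assumes "f \<in> word_span S" "\<And>v. v \<in> S \<Longrightarrow> u @ v \<in> T"
  shows "fmul (fword u) f \<in> word_span T"
  using assms(1)
proof (induction rule: word_span_induct)
  case zero
  show ?case by (simp add: fmul_zero_right word_span_zero)
next
  case (add f g)
  then show ?case by (simp add: fmul_add_right word_span_add)
next
  case (scale f c)
  then show ?case by (simp add: fmul_scale_right word_span_scale)
next
  case (word v)
  then show ?case by (simp add: fmul_fword_fword word_span_fword assms(2))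
qed

abbreviation remove_nth :: "nat \<Rightarrow> 'a list \<Rightarrow> 'a list" where
  "remove_nth l u \<equiv> take l u @ drop (Suc l) u"

definition shorter_words :: "nat \<Rightarrow> 'a list \<Rightarrow> 'a list \<Rightarrow> 'a list set" where
  "shorter_words k u v = {s @ v | s. set s \<subseteq> set u \<and> length s + k \<le> length u}"

lemma shorter_words_antimono: "k' \<le> k \<Longrightarrow> shorter_words k u v \<subseteq> shorter_words k' u v"
  unfolding shorter_words_def by auto

lemma shorter_words_Cons: "k \<le> Suc k' \<Longrightarrow> shorter_words k' u v \<subseteq> shorter_words k (b # u) v"
  unfolding shorter_words_def by auto

lemma Cons_shorter_words:
  assumes "w \<in> shorter_words k u v"
  shows "b # w \<in> shorter_words k (b # u) v"
proof -
  obtain s where "w = s @ v" "set s \<subseteq> set u" "length s + k \<le> length u"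
    using assms unfolding shorter_words_def by blast
  then show ?thesis unfolding shorter_words_def by (intro CollectI exI[of _ "b # s"]) auto
qed

lemma remove_nth_shorter_words: "l < length u \<Longrightarrow> remove_nth l u @ v \<in> shorter_words 1 u v"
  unfolding shorter_words_def by (auto dest: in_set_takeD in_set_dropD)

lemma sum_remove_nth_word_span:
  "(\<lambda>w. \<Sum>l<length u. c l * fword (remove_nth l u @ v) w) \<in> word_span (shorter_words 1 u v)"
  by (intro word_span_sum word_span_scale word_span_fword remove_nth_shorter_words) auto

section \<open>Lie algebras and the relations of \<open>W(\<phi>)\<close>\<close>

locale complex_lie_algebra =
  fixes smul :: "complex \<Rightarrow> 'g::ab_group_add \<Rightarrow> 'g"
    and br :: "'g \<Rightarrow> 'g \<Rightarrow> 'g"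
  assumes lie: "lie_algebra smul br"
begin

sublocale V: vector_space smul
  using lie unfolding lie_algebra_def by blast

lemma br_add_left: "br (x + y) z = br x z + br y z"
  using lie unfolding lie_algebra_def by blast
lemma br_add_right: "br x (y + z) = br x y + br x z"
  using lie unfolding lie_algebra_def by blast
lemma br_scale_left: "br (smul c x) y = smul c (br x y)"
  using lie unfolding lie_algebra_def by blast
lemma br_scale_right: "br x (smul c y) = smul c (br x y)"
  using lie unfolding lie_algebra_def by blast
lemma br_self: "br x x = 0"
  using lie unfolding lie_algebra_def by blast
lemma jacobi: "br x (br y z) + br y (br z x) + br z (br x y) = 0"
  using lie unfolding lie_algebra_def by blast

lemma br_zero_left [simp]: "br 0 x = 0"
  using br_add_left[of 0 0 x] by simp
lemma br_zero_right [simp]: "br x 0 = 0"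
  using br_add_right[of x 0 0] by simp
lemma br_diff_left: "br (x - y) z = br x z - br y z"
  using br_add_left[of "x - y" y z] by (simp add: eq_diff_eq)
lemma br_diff_right: "br x (y - z) = br x y - br x z"
  using br_add_right[of x "y - z" z] by (simp add: eq_diff_eq)
lemma br_sum_left: "br (\<Sum>i\<in>I. f i) z = (\<Sum>i\<in>I. br (f i) z)"
  by (induction I rule: infinite_finite_induct) (auto simp: br_add_left)
lemma br_sum_right: "br z (\<Sum>i\<in>I. f i) = (\<Sum>i\<in>I. br z (f i))"
  by (induction I rule: infinite_finite_induct) (auto simp: br_add_right)

lemma br_antisym: "br x y = - br y x"
proof -
  have "br (x + y) (x + y) = br x y + br y x"
    by (simp add: br_add_left br_add_right br_self[of x] br_self[of y])
  then have "br x y + br y x = 0" by (simp add: br_self)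
  then show ?thesis by (simp add: eq_neg_iff_add_eq_0)
qed

end

locale whittaker_module = complex_lie_algebra smul br
  for smul :: "complex \<Rightarrow> 'g::ab_group_add \<Rightarrow> 'g" and br +
  fixes P :: "'g set"
    and phi :: "'g \<Rightarrow> complex"
  assumes ideal: "lie_ideal smul br P"
    and hom: "lie_hom_to_C smul br P phi"
begin

lemma P_subspace: "V.subspace P"
  using ideal unfolding lie_ideal_def by blast
lemma zero_in_P: "0 \<in> P"
  using P_subspace V.subspace_0 by blast
lemma P_add: "a \<in> P \<Longrightarrow> b \<in> P \<Longrightarrow> a + b \<in> P"
  using P_subspace V.subspace_add by blast
lemma P_scale: "a \<in> P \<Longrightarrow> smul c a \<in> P"
  using P_subspace V.subspace_scale by blast
lemma P_diff: "a \<in> P \<Longrightarrow> b \<in> P \<Longrightarrow> a - b \<in> P"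
  using P_subspace V.subspace_diff by blast
lemma P_sum: "(\<And>i. i \<in> I \<Longrightarrow> f i \<in> P) \<Longrightarrow> (\<Sum>i\<in>I. f i) \<in> P"
  using P_subspace V.subspace_sum by blast
lemma br_in_P_right: "p \<in> P \<Longrightarrow> br x p \<in> P"
  using ideal unfolding lie_ideal_def by blast
lemma br_in_P_left: "p \<in> P \<Longrightarrow> br p x \<in> P"
  using br_in_P_right[of p x] br_antisym[of p x] P_subspace V.subspace_neg by fastforce

lemma phi_add: "a \<in> P \<Longrightarrow> b \<in> P \<Longrightarrow> phi (a + b) = phi a + phi b"
  using hom unfolding lie_hom_to_C_def by blast
lemma phi_scale: "a \<in> P \<Longrightarrow> phi (smul c a) = c * phi a"
  using hom unfolding lie_hom_to_C_def by blast
lemma phi_zero [simp]: "phi 0 = 0"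
  using phi_scale[OF zero_in_P, of 0] by simp
lemma phi_neg: "a \<in> P \<Longrightarrow> phi (- a) = - phi a"
  using phi_scale[of a "-1"] by simp
lemma phi_diff: "a \<in> P \<Longrightarrow> b \<in> P \<Longrightarrow> phi (a - b) = phi a - phi b"
  using phi_add[of "a - b" b] P_diff[of a b] by (simp add: eq_diff_eq)
lemma phi_sum: "(\<And>i. i \<in> I \<Longrightarrow> f i \<in> P) \<Longrightarrow> phi (\<Sum>i\<in>I. f i) = (\<Sum>i\<in>I. phi (f i))"
proof (induction I rule: infinite_finite_induct)
  case (insert x F)
  then show ?case using phi_add[of "f x" "sum f F"] P_sum[of F f] by auto
qed auto

abbreviation W where "W \<equiv> W_ideal smul br P phi"

lemma W_ext: "x \<in> W \<Longrightarrow> (\<And>w. x w = z w) \<Longrightarrow> z \<in> W"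
proof -
  assume "x \<in> W" "\<And>w. x w = z w"
  then have "x = z" by (auto intro: ext)
  with \<open>x \<in> W\<close> show ?thesis by simp
qed
lemma W_diff: "x \<in> W \<Longrightarrow> z \<in> W \<Longrightarrow> (\<lambda>w. x w - z w) \<in> W"
  by (drule W_ideal.add[OF _ W_ideal.scale[where c="-1"]]) (erule W_ext, simp)+
lemma W_sum: "(\<And>i. i \<in> I \<Longrightarrow> f i \<in> W) \<Longrightarrow> (\<lambda>w. \<Sum>i\<in>I. f i w) \<in> W"
proof (induction I rule: infinite_finite_induct)
  case (insert x F)
  then have "(\<lambda>w. f x w + (\<Sum>i\<in>F. f i w)) \<in> W" by (intro W_ideal.add) auto
  then show ?case using insert by simp
qed (auto intro: W_ideal.zero)

definition congW :: "('g list \<Rightarrow> complex) \<Rightarrow> ('g list \<Rightarrow> complex) \<Rightarrow> bool" (infix "\<approx>\<^sub>W" 50)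
  where "f \<approx>\<^sub>W g \<longleftrightarrow> (\<lambda>w. f w - g w) \<in> W"

lemma congW_refl [simp]: "f \<approx>\<^sub>W f"
  unfolding congW_def by (rule W_ext[OF W_ideal.zero]) simp
lemma congW_sym: "f \<approx>\<^sub>W g \<Longrightarrow> g \<approx>\<^sub>W f"
  unfolding congW_def by (drule W_ideal.scale[where c="-1"]) (erule W_ext, simp)
lemma congW_trans [trans]: "f \<approx>\<^sub>W g \<Longrightarrow> g \<approx>\<^sub>W h \<Longrightarrow> f \<approx>\<^sub>W h"
  unfolding congW_def by (drule (1) W_ideal.add) (erule W_ext, simp)
lemma congW_add: "f \<approx>\<^sub>W f' \<Longrightarrow> g \<approx>\<^sub>W g' \<Longrightarrow> (\<lambda>w. f w + g w) \<approx>\<^sub>W (\<lambda>w. f' w + g' w)"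
  unfolding congW_def by (drule (1) W_ideal.add) (erule W_ext, simp)
lemma congW_diff: "f \<approx>\<^sub>W f' \<Longrightarrow> g \<approx>\<^sub>W g' \<Longrightarrow> (\<lambda>w. f w - g w) \<approx>\<^sub>W (\<lambda>w. f' w - g' w)"
  unfolding congW_def by (drule (1) W_diff) (erule W_ext, simp)
lemma congW_scale: "f \<approx>\<^sub>W f' \<Longrightarrow> (\<lambda>w. c * f w) \<approx>\<^sub>W (\<lambda>w. c * f' w)"
  unfolding congW_def by (drule W_ideal.scale[where c=c]) (erule W_ext, simp add: algebra_simps)
lemma congW_fmul: "fin_supp h \<Longrightarrow> f \<approx>\<^sub>W f' \<Longrightarrow> fmul h f \<approx>\<^sub>W fmul h f'"
  unfolding congW_def by (drule (1) W_ideal.lmul) (simp add: fmul_diff_right)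
lemma congW_sum:
  "(\<And>i. i \<in> I \<Longrightarrow> f i \<approx>\<^sub>W g i) \<Longrightarrow> (\<lambda>w. \<Sum>i\<in>I. f i w) \<approx>\<^sub>W (\<lambda>w. \<Sum>i\<in>I. g i w)"
  unfolding congW_def by (drule W_sum) (erule W_ext, simp add: sum_subtractf)
lemma congW_zero_iff: "f \<approx>\<^sub>W (\<lambda>w. 0) \<longleftrightarrow> f \<in> W"
  unfolding congW_def by simp
lemma congW_ext: "f \<approx>\<^sub>W g \<Longrightarrow> (\<And>w. f w = f' w) \<Longrightarrow> (\<And>w. g w = g' w) \<Longrightarrow> f' \<approx>\<^sub>W g'"
proof -
  assume "f \<approx>\<^sub>W g" "\<And>w. f w = f' w" "\<And>w. g w = g' w"
  then have "f = f'" "g = g'" by (auto intro: ext)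
  with \<open>f \<approx>\<^sub>W g\<close> show ?thesis by simp
qed

definition reduces_to :: "'g list set \<Rightarrow> ('g list \<Rightarrow> complex) \<Rightarrow> bool" where
  "reduces_to S f \<longleftrightarrow> (\<exists>h\<in>word_span S. f \<approx>\<^sub>W h)"

lemma reduces_to_word_span: "f \<in> word_span S \<Longrightarrow> reduces_to S f"
  unfolding reduces_to_def by (rule bexI[of _ f]) auto
lemma reduces_to_fword: "u \<in> S \<Longrightarrow> reduces_to S (fword u)"
  by (intro reduces_to_word_span word_span_fword)
lemma reduces_to_zero: "reduces_to S (\<lambda>w. 0)"
  by (intro reduces_to_word_span word_span_zero)
lemma reduces_to_add: "reduces_to S f \<Longrightarrow> reduces_to S g \<Longrightarrow> reduces_to S (\<lambda>w. f w + g w)"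
  unfolding reduces_to_def by (blast intro: congW_add word_span_add)
lemma reduces_to_scale: "reduces_to S f \<Longrightarrow> reduces_to S (\<lambda>w. c * f w)"
  unfolding reduces_to_def by (blast intro: congW_scale word_span_scale)
lemma reduces_to_diff: "reduces_to S f \<Longrightarrow> reduces_to S g \<Longrightarrow> reduces_to S (\<lambda>w. f w - g w)"
  using reduces_to_add[OF _ reduces_to_scale[of S g "-1"]] by simp
lemma reduces_to_congW: "f \<approx>\<^sub>W g \<Longrightarrow> reduces_to S g \<Longrightarrow> reduces_to S f"
  unfolding reduces_to_def by (blast intro: congW_trans)
lemma reduces_to_mono: "reduces_to S f \<Longrightarrow> S \<subseteq> T \<Longrightarrow> reduces_to T f"
  unfolding reduces_to_def by (blast intro: word_span_mono)
lemma reduces_to_sum: "(\<And>i. i \<in> I \<Longrightarrow> reduces_to S (f i)) \<Longrightarrow> reduces_to S (\<lambda>w. \<Sum>i\<in>I. f i w)"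
proof (induction I rule: infinite_finite_induct)
  case (insert x F)
  then have "reduces_to S (\<lambda>w. f x w + (\<Sum>i\<in>F. f i w))" by (intro reduces_to_add) auto
  then show ?case using insert by simp
qed (auto intro: reduces_to_zero)
lemma reduces_to_ext: "reduces_to S f \<Longrightarrow> (\<And>w. f w = g w) \<Longrightarrow> reduces_to S g"
  using reduces_to_congW[of g f S] congW_ext[OF congW_refl[of f]] by blast

lemma reduces_to_trans:
  assumes "reduces_to S f" "\<And>u. u \<in> S \<Longrightarrow> reduces_to T (fword u)"
  shows "reduces_to T f"
proof -
  obtain h where h: "h \<in> word_span S" "f \<approx>\<^sub>W h"
    using assms(1) unfolding reduces_to_def by blast
  from h(1) have "reduces_to T h"
    by (induction rule: word_span_induct)
       (auto intro: reduces_to_zero reduces_to_add reduces_to_scale assms(2))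
  then show ?thesis by (rule reduces_to_congW[OF h(2)])
qed

lemma reduces_to_fmul_fword:
  assumes "reduces_to S f" "\<And>v. v \<in> S \<Longrightarrow> u @ v \<in> T"
  shows "reduces_to T (fmul (fword u) f)"
proof -
  obtain h where h: "h \<in> word_span S" "f \<approx>\<^sub>W h"
    using assms(1) unfolding reduces_to_def by blast
  then have "fmul (fword u) f \<approx>\<^sub>W fmul (fword u) h" by (intro congW_fmul) auto
  moreover have "fmul (fword u) h \<in> word_span T" using h assms(2) by (intro word_span_fmul_fword)
  ultimately show ?thesis unfolding reduces_to_def by blast
qed

lemma U_ideal_sandwich_in_W:
  assumes "r \<in> U_ideal smul br"
  shows "fmul (fword pre) (fmul r (fword suf)) \<in> W"
  by (intro W_ideal.uid U_ideal.lmul U_ideal.rmul assms) auto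

lemma fword_letter_add:
  "fword (pre @ (a + b) # suf) \<approx>\<^sub>W (\<lambda>w. fword (pre @ a # suf) w + fword (pre @ b # suf) w)"
proof -
  have "(\<lambda>w. fgen (a + b) w - fgen a w - fgen b w) \<in> U_ideal smul br"
    by (intro U_ideal.gen) (auto simp: U_relations_def)
  from U_ideal_sandwich_in_W[OF this, of pre suf] show ?thesis
    unfolding congW_def
    by (simp add: fmul_diff_left fmul_diff_right fgen_def fmul_fword_fword) (erule W_ext, simp)
qed

lemma fword_letter_scale: "fword (pre @ smul c a # suf) \<approx>\<^sub>W (\<lambda>w. c * fword (pre @ a # suf) w)"
proof -
  have "(\<lambda>w. fgen (smul c a) w - c * fgen a w) \<in> U_ideal smul br"
    by (intro U_ideal.gen) (auto simp: U_relations_def)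
  from U_ideal_sandwich_in_W[OF this, of pre suf] show ?thesis
    unfolding congW_def
    by (simp add: fmul_diff_left fmul_diff_right fmul_scale_left fmul_scale_right fgen_def fmul_fword_fword)
qed

lemma fword_letter_zero: "fword (pre @ 0 # suf) \<approx>\<^sub>W (\<lambda>w. 0)"
  using fword_letter_scale[of pre 0 0 suf] by simp

lemma fword_swap_letters:
  "fword (pre @ a # b # suf) \<approx>\<^sub>W (\<lambda>w. fword (pre @ b # a # suf) w + fword (pre @ br a b # suf) w)"
proof -
  have "(\<lambda>w. fmul (fgen a) (fgen b) w - fmul (fgen b) (fgen a) w - fgen (br a b) w) \<in> U_ideal smul br"
    by (intro U_ideal.gen) (auto simp: U_relations_def)
  from U_ideal_sandwich_in_W[OF this, of pre suf] show ?thesis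
    unfolding congW_def
    by (simp add: fmul_diff_left fmul_diff_right fgen_def fmul_fword_fword) (erule W_ext, simp)
qed

lemma fword_P_last:
  assumes "p \<in> P"
  shows "fword (pre @ [p]) \<approx>\<^sub>W (\<lambda>w. phi p * fword pre w)"
proof -
  from assms have "(\<lambda>w. fgen p w - phi p * fone w) \<in> W" by (rule W_ideal.gen)
  from W_ideal.lmul[OF this fin_supp_fword[of pre]] show ?thesis
    unfolding congW_def by (simp add: fmul_diff_right fmul_scale_right fgen_def fone_def fmul_fword_fword)
qed

lemma fword_letter_lincomb:
  assumes "finite I"
  shows "fword (pre @ (\<Sum>i\<in>I. smul (c i) (z i)) # suf) \<approx>\<^sub>W (\<lambda>w. \<Sum>i\<in>I. c i * fword (pre @ z i # suf) w)"
  using assms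
proof (induction I rule: finite_induct)
  case empty
  then show ?case using fword_letter_zero by simp
next
  case (insert x F)
  have "fword (pre @ (smul (c x) (z x) + (\<Sum>i\<in>F. smul (c i) (z i))) # suf) \<approx>\<^sub>W
      (\<lambda>w. fword (pre @ smul (c x) (z x) # suf) w + fword (pre @ (\<Sum>i\<in>F. smul (c i) (z i)) # suf) w)"
    by (rule fword_letter_add)
  also have "\<dots> \<approx>\<^sub>W (\<lambda>w. c x * fword (pre @ z x # suf) w + (\<Sum>i\<in>F. c i * fword (pre @ z i # suf) w))"
    by (intro congW_add fword_letter_scale insert.IH)
  finally show ?case using insert by simp
qed

lemma reduces_to_letter_span:
  assumes "a \<in> V.span B" "\<And>b. b \<in> B \<Longrightarrow> reduces_to T (fword (pre @ b # suf))"
  shows "reduces_to T (fword (pre @ a # suf))"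
proof -
  have "V.subspace {a. reduces_to T (fword (pre @ a # suf))}"
  proof (rule V.subspaceI)
    show "0 \<in> {a. reduces_to T (fword (pre @ a # suf))}"
      using reduces_to_congW[OF fword_letter_zero reduces_to_zero] by simp
    show "a + b \<in> {a. reduces_to T (fword (pre @ a # suf))}"
      if "a \<in> {a. reduces_to T (fword (pre @ a # suf))}" "b \<in> {a. reduces_to T (fword (pre @ a # suf))}"
      for a b using that reduces_to_congW[OF fword_letter_add reduces_to_add] by simp
    show "smul c a \<in> {a. reduces_to T (fword (pre @ a # suf))}"
      if "a \<in> {a. reduces_to T (fword (pre @ a # suf))}" for c a
      using that reduces_to_congW[OF fword_letter_scale reduces_to_scale] by simp
  qed
  then show ?thesis
    using V.span_induct[OF assms(1), of "\<lambda>a. reduces_to T (fword (pre @ a # suf))"] assms(2) by blast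
qed

definition whittaker_word :: "'g list \<Rightarrow> bool" where
  "whittaker_word v \<longleftrightarrow> (\<forall>p\<in>P. fword (p # v) \<approx>\<^sub>W (\<lambda>w. phi p * fword v w))"

lemma whittaker_word_prefix:
  assumes "whittaker_word v" "p \<in> P"
  shows "fword (pre @ p # v) \<approx>\<^sub>W (\<lambda>w. phi p * fword (pre @ v) w)"
proof -
  have "fword (p # v) \<approx>\<^sub>W (\<lambda>w. phi p * fword v w)"
    using assms unfolding whittaker_word_def by blast
  from congW_fmul[OF fin_supp_fword this, of pre] show ?thesis
    by (simp add: fmul_fword_fword fmul_scale_right)
qed

text \<open>Each bracket \<open>[a, u ! l]\<close> lies in \<open>P\<close> again and is moved on to \<open>v\<close>, where it acts by
  its \<open>\<phi>\<close>-value; the brackets created on the way shorten the word by two letters.\<close>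
lemma commute_P_letter:
  assumes "a \<in> P" "whittaker_word v"
  shows "\<exists>R\<in>word_span (shorter_words 2 u v). fword (a # u @ v) \<approx>\<^sub>W
     (\<lambda>w. phi a * fword (u @ v) w
        + (\<Sum>l<length u. phi (br a (u ! l)) * fword (remove_nth l u @ v) w) + R w)"
  using assms(1)
proof (induction u arbitrary: a)
  case Nil
  then show ?case
    using whittaker_word_prefix[OF assms(2), of a "[]"] by (auto intro!: bexI[of _ "\<lambda>w. 0"] word_span_zero)
next
  case (Cons b u)
  obtain R1 where R1: "R1 \<in> word_span (shorter_words 2 u v)"
    "fword (a # u @ v) \<approx>\<^sub>W (\<lambda>w. phi a * fword (u @ v) w
        + (\<Sum>l<length u. phi (br a (u ! l)) * fword (remove_nth l u @ v) w) + R1 w)"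
    using Cons.IH[OF Cons.prems] by blast
  obtain R2 where R2: "R2 \<in> word_span (shorter_words 2 u v)"
    "fword (br a b # u @ v) \<approx>\<^sub>W (\<lambda>w. phi (br a b) * fword (u @ v) w
        + (\<Sum>l<length u. phi (br (br a b) (u ! l)) * fword (remove_nth l u @ v) w) + R2 w)"
    using Cons.IH[OF br_in_P_left[OF Cons.prems]] by blast
  define R where "R = (\<lambda>w. fmul (fword [b]) R1 w
     + (\<Sum>l<length u. phi (br (br a b) (u ! l)) * fword (remove_nth l u @ v) w) + R2 w)"
  have R_span: "R \<in> word_span (shorter_words 2 (b # u) v)"
    unfolding R_def
  proof (intro word_span_add)
    show "fmul (fword [b]) R1 \<in> word_span (shorter_words 2 (b # u) v)"
      using R1(1) by (rule word_span_fmul_fword) (simp add: Cons_shorter_words)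
    show "R2 \<in> word_span (shorter_words 2 (b # u) v)"
      using R2(1) shorter_words_Cons by (rule word_span_mono) simp
    show "(\<lambda>w. \<Sum>l<length u. phi (br (br a b) (u ! l)) * fword (remove_nth l u @ v) w)
        \<in> word_span (shorter_words 2 (b # u) v)"
      using sum_remove_nth_word_span shorter_words_Cons by (rule word_span_mono) simp
  qed
  have "fword (a # b # u @ v) \<approx>\<^sub>W (\<lambda>w. fword (b # a # u @ v) w + fword (br a b # u @ v) w)"
    using fword_swap_letters[of "[]"] by simp
  also have "\<dots> \<approx>\<^sub>W (\<lambda>w. (phi a * fword (b # u @ v) w
        + (\<Sum>l<length u. phi (br a (u ! l)) * fword (b # remove_nth l u @ v) w) + fmul (fword [b]) R1 w)
      + (phi (br a b) * fword (u @ v) w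
        + (\<Sum>l<length u. phi (br (br a b) (u ! l)) * fword (remove_nth l u @ v) w) + R2 w))"
    using congW_fmul[OF fin_supp_fword R1(2), of "[b]"] R2(2)
    by (intro congW_add) (simp_all add: fmul_fword_fword fmul_add_right fmul_scale_right fmul_sum_right)
  also have "\<dots> = (\<lambda>w. phi a * fword ((b # u) @ v) w
      + (\<Sum>l<length (b # u). phi (br a ((b # u) ! l)) * fword (remove_nth l (b # u) @ v) w) + R w)"
    by (rule ext) (simp only: length_Cons sum.lessThan_Suc_shift, simp add: R_def algebra_simps)
  finally show ?case using R_span by auto
qed

lemma commute_P_letter_coarse:
  assumes "a \<in> P" "whittaker_word v"
  shows "\<exists>R\<in>word_span (shorter_words 1 u v). fword (a # u @ v) \<approx>\<^sub>W (\<lambda>w. phi a * fword (u @ v) w + R w)"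
proof -
  obtain R where R: "R \<in> word_span (shorter_words 2 u v)"
    "fword (a # u @ v) \<approx>\<^sub>W (\<lambda>w. phi a * fword (u @ v) w
        + (\<Sum>l<length u. phi (br a (u ! l)) * fword (remove_nth l u @ v) w) + R w)"
    using commute_P_letter[OF assms] by blast
  define R' where "R' = (\<lambda>w. (\<Sum>l<length u. phi (br a (u ! l)) * fword (remove_nth l u @ v) w) + R w)"
  have "R' \<in> word_span (shorter_words 1 u v)"
    unfolding R'_def using word_span_mono[OF R(1) shorter_words_antimono]
    by (intro word_span_add sum_remove_nth_word_span) simp
  moreover have "fword (a # u @ v) \<approx>\<^sub>W (\<lambda>w. phi a * fword (u @ v) w + R' w)"
    using R(2) by (rule congW_ext) (simp_all add: R'_def algebra_simps)
  ultimately show ?thesis by blast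
qed

definition whittaker_defect :: "'g \<Rightarrow> ('g list \<Rightarrow> complex) \<Rightarrow> ('g list \<Rightarrow> complex)" where
  "whittaker_defect p f = (\<lambda>w. fmul (fgen p) f w - phi p * f w)"

lemma quasi_whittaker_rep_iff: "quasi_whittaker_rep smul br P phi f \<longleftrightarrow> (\<forall>p\<in>P. whittaker_defect p f \<in> W)"
  by (simp add: quasi_whittaker_rep_def whittaker_defect_def)

lemma whittaker_defect_fword: "whittaker_defect p (fword u) = (\<lambda>w. fword (p # u) w - phi p * fword u w)"
  by (simp add: whittaker_defect_def fgen_def fmul_fword_fword)
lemma whittaker_defect_add:
  "whittaker_defect p (\<lambda>w. f w + g w) = (\<lambda>w. whittaker_defect p f w + whittaker_defect p g w)"
  by (simp add: whittaker_defect_def fmul_add_right algebra_simps)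
lemma whittaker_defect_scale: "whittaker_defect p (\<lambda>w. c * f w) = (\<lambda>w. c * whittaker_defect p f w)"
  by (simp add: whittaker_defect_def fmul_scale_right algebra_simps)
lemma whittaker_defect_zero: "whittaker_defect p (\<lambda>w. 0) = (\<lambda>w. 0)"
  by (simp add: whittaker_defect_def fmul_zero_right)
lemma whittaker_defect_sum:
  "whittaker_defect p (\<lambda>w. \<Sum>i\<in>I. g i w) = (\<lambda>w. \<Sum>i\<in>I. whittaker_defect p (g i) w)"
  by (simp add: whittaker_defect_def fmul_sum_right sum_distrib_left sum_subtractf)

lemma whittaker_defect_congW: "f \<approx>\<^sub>W g \<Longrightarrow> whittaker_defect p f \<approx>\<^sub>W whittaker_defect p g"
  unfolding whittaker_defect_def by (intro congW_diff congW_fmul congW_scale) auto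

definition euler_operator :: "('g \<times> 'g) set \<Rightarrow> ('g list \<Rightarrow> complex) \<Rightarrow> ('g list \<Rightarrow> complex)" where
  "euler_operator ds f = (\<lambda>w. \<Sum>d\<in>ds. fmul (fgen (fst d)) (whittaker_defect (snd d) f) w)"

lemma euler_operator_add:
  "euler_operator ds (\<lambda>w. f w + g w) = (\<lambda>w. euler_operator ds f w + euler_operator ds g w)"
  by (simp add: euler_operator_def whittaker_defect_add fmul_add_right sum.distrib)
lemma euler_operator_scale: "euler_operator ds (\<lambda>w. c * f w) = (\<lambda>w. c * euler_operator ds f w)"
  by (simp add: euler_operator_def whittaker_defect_scale fmul_scale_right sum_distrib_left)
lemma euler_operator_zero: "euler_operator ds (\<lambda>w. 0) = (\<lambda>w. 0)"
  by (simp add: euler_operator_def whittaker_defect_zero fmul_zero_right)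

lemma euler_operator_congW: "f \<approx>\<^sub>W g \<Longrightarrow> euler_operator ds f \<approx>\<^sub>W euler_operator ds g"
  unfolding euler_operator_def by (intro congW_sum congW_fmul whittaker_defect_congW) auto

lemma euler_operator_in_W: "(\<And>d. d \<in> ds \<Longrightarrow> whittaker_defect (snd d) f \<in> W) \<Longrightarrow> euler_operator ds f \<in> W"
  unfolding euler_operator_def by (intro W_sum W_ideal.lmul) auto

definition pairing :: "'g \<Rightarrow> 'g \<Rightarrow> complex" where
  "pairing p a = phi (br p a)"

lemma pairing_add_right: "p \<in> P \<Longrightarrow> pairing p (a + b) = pairing p a + pairing p b"
  unfolding pairing_def by (simp add: br_add_right phi_add br_in_P_left)
lemma pairing_scale_right: "p \<in> P \<Longrightarrow> pairing p (smul c a) = c * pairing p a"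
  unfolding pairing_def by (simp add: br_scale_right phi_scale br_in_P_left)
lemma pairing_diff_right: "p \<in> P \<Longrightarrow> pairing p (a - b) = pairing p a - pairing p b"
  unfolding pairing_def by (simp add: br_diff_right phi_diff br_in_P_left)
lemma pairing_sum_right: "p \<in> P \<Longrightarrow> pairing p (\<Sum>i\<in>I. f i) = (\<Sum>i\<in>I. pairing p (f i))"
  unfolding pairing_def by (simp add: br_sum_right phi_sum br_in_P_left)
lemma pairing_scale_left: "p \<in> P \<Longrightarrow> pairing (smul c p) a = c * pairing p a"
  unfolding pairing_def by (simp add: br_scale_left phi_scale br_in_P_left)
lemma pairing_diff_left: "p \<in> P \<Longrightarrow> q \<in> P \<Longrightarrow> pairing (p - q) a = pairing p a - pairing q a"
  unfolding pairing_def by (simp add: br_diff_left phi_diff br_in_P_left)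
lemma pairing_sum_left: "(\<And>i. i \<in> I \<Longrightarrow> f i \<in> P) \<Longrightarrow> pairing (\<Sum>i\<in>I. f i) a = (\<Sum>i\<in>I. pairing (f i) a)"
  unfolding pairing_def by (simp add: br_sum_left phi_sum br_in_P_left)

lemma fgen_whittaker_defect_fword:
  assumes "a \<in> P" "whittaker_word v"
  shows "\<exists>R\<in>word_span (shorter_words 2 u v). fmul (fgen x) (whittaker_defect a (fword (u @ v))) \<approx>\<^sub>W
     (\<lambda>w. (\<Sum>l<length u. pairing a (u ! l) * fword (x # remove_nth l u @ v) w) + fmul (fword [x]) R w)"
proof -
  obtain R where R: "R \<in> word_span (shorter_words 2 u v)"
    "fword (a # u @ v) \<approx>\<^sub>W (\<lambda>w. phi a * fword (u @ v) w
        + (\<Sum>l<length u. pairing a (u ! l) * fword (remove_nth l u @ v) w) + R w)"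
    using commute_P_letter[OF assms] unfolding pairing_def by blast
  have "whittaker_defect a (fword (u @ v)) \<approx>\<^sub>W (\<lambda>w. (phi a * fword (u @ v) w
      + (\<Sum>l<length u. pairing a (u ! l) * fword (remove_nth l u @ v) w) + R w) - phi a * fword (u @ v) w)"
    unfolding whittaker_defect_fword using R(2) by (intro congW_diff) auto
  then have "whittaker_defect a (fword (u @ v)) \<approx>\<^sub>W
      (\<lambda>w. (\<Sum>l<length u. pairing a (u ! l) * fword (remove_nth l u @ v) w) + R w)"
    by (rule congW_ext) simp_all
  from congW_fmul[OF fin_supp_fgen this, of x]
  have "fmul (fgen x) (whittaker_defect a (fword (u @ v))) \<approx>\<^sub>W
      (\<lambda>w. (\<Sum>l<length u. pairing a (u ! l) * fword (x # remove_nth l u @ v) w) + fmul (fword [x]) R w)"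
    by (simp add: fgen_def fmul_add_right fmul_sum_right fmul_scale_right fmul_fword_fword)
  with R(1) show ?thesis by blast
qed

end

lemma (in vector_space) subspace_complement_exists:
  assumes "subspace G"
  shows "\<exists>X. subspace X \<and> (\<forall>a. \<exists>g\<in>G. \<exists>x\<in>X. a = g + x) \<and> (\<forall>x\<in>X. x \<in> G \<longrightarrow> x = 0)"
proof -
  obtain B0 where B0: "B0 \<subseteq> G" "independent B0" "G \<subseteq> span B0"
    using maximal_independent_subset[of G] by blast
  define B where "B = extend_basis B0"
  have B: "B0 \<subseteq> B" "independent B" "span B = UNIV"
    using extend_basis_superset[OF B0(2)] independent_extend_basis[OF B0(2)] span_extend_basis[OF B0(2)]
    unfolding B_def by auto
  have span_B0: "span B0 = G"
    using B0 assms span_minimal[of B0 G] by blast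
  have "\<exists>g\<in>G. \<exists>x\<in>span (B - B0). a = g + x" for a
  proof -
    have "a \<in> span (B0 \<union> (B - B0))" using B by (simp add: Un_absorb1)
    then show ?thesis unfolding span_Un span_B0 by blast
  qed
  moreover have "x = 0" if x: "x \<in> span (B - B0)" "x \<in> G" for x
  proof -
    have "representation B x = representation B0 x" "representation B x = representation (B - B0) x"
      using x B span_B0 by (auto intro: representation_extend)
    then have "representation B x = (\<lambda>b. 0)"
      using representation_ne_zero[of B0 x] representation_ne_zero[of "B - B0" x] by fastforce
    then show ?thesis
      using sum_nonzero_representation_eq[OF B(2), of x] B(3) by simp
  qed
  ultimately show ?thesis by (intro exI[of _ "span (B - B0)"]) auto
qed

section \<open>Normal forms\<close>

locale whittaker_complement = whittaker_module smul br P phi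
  for smul :: "complex \<Rightarrow> 'g::ab_group_add \<Rightarrow> 'g" and br P phi +
  fixes y :: "'j::linorder \<Rightarrow> 'g"
    and J :: "'j set"
  assumes y_inj: "inj_on y J"
    and y_sub: "module.span smul (y ` J) \<subseteq> whittaker_annihilator br P phi"
    and y_sum: "\<forall>g \<in> whittaker_annihilator br P phi. \<exists>u \<in> module.span smul (y ` J). \<exists>p \<in> P. g = u + p"
begin

abbreviation G where "G \<equiv> whittaker_annihilator br P phi"
abbreviation Y where "Y \<equiv> V.span (y ` J)"

lemma y_in_Y: "j \<in> J \<Longrightarrow> y j \<in> Y"
  by (rule V.span_base) simp

lemma G_subspace: "V.subspace G"
proof (rule V.subspaceI)
  show "0 \<in> G" by (simp add: whittaker_annihilator_def)
  show "a + b \<in> G" if "a \<in> G" "b \<in> G" for a b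
    using that by (auto simp: whittaker_annihilator_def br_add_left phi_add br_in_P_right)
  show "smul c a \<in> G" if "a \<in> G" for c a
    using that by (auto simp: whittaker_annihilator_def br_scale_left phi_scale br_in_P_right)
qed

lemma pairing_G: "a \<in> G \<Longrightarrow> p \<in> P \<Longrightarrow> pairing p a = 0"
  using phi_neg[OF br_in_P_right[of p a]] br_antisym[of p a]
  by (simp add: whittaker_annihilator_def pairing_def)

lemma br_in_G:
  assumes "a \<in> G" "b \<in> G"
  shows "br a b \<in> G"
  unfolding whittaker_annihilator_def
proof (intro CollectI ballI)
  fix p assume p: "p \<in> P"
  have "phi (br a (br b p) + br b (br p a) + br p (br a b)) =
      phi (br a (br b p)) + phi (br b (br p a)) + phi (br p (br a b))"
    using p by (simp add: phi_add P_add br_in_P_right br_in_P_left)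
  moreover have "phi (br a (br b p)) = 0" "phi (br b (br p a)) = 0"
    using assms p br_in_P_right br_in_P_left by (auto simp: whittaker_annihilator_def)
  ultimately have "pairing p (br a b) = 0" by (simp add: jacobi pairing_def)
  then show "phi (br (br a b) p) = 0"
    using phi_neg[OF br_in_P_left[of p "br a b"]] br_antisym[of "br a b" p] p by (simp add: pairing_def)
qed

definition X where
  "X = (SOME X. V.subspace X \<and> (\<forall>a. \<exists>g\<in>G. \<exists>x\<in>X. a = g + x) \<and> (\<forall>x\<in>X. x \<in> G \<longrightarrow> x = 0))"

lemma X_subspace: "V.subspace X"
  and G_plus_X: "\<exists>g\<in>G. \<exists>x\<in>X. a = g + x"
  and X_inter_G: "x \<in> X \<Longrightarrow> x \<in> G \<Longrightarrow> x = 0"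
  using someI_ex[OF V.subspace_complement_exists[OF G_subspace]] unfolding X_def by blast+

lemma decompose_P_Y_X: "\<exists>p\<in>P. \<exists>u\<in>Y. \<exists>x\<in>X. a = p + u + x"
proof -
  obtain g x where "g \<in> G" "x \<in> X" "a = g + x" using G_plus_X by blast
  moreover obtain u p where "u \<in> Y" "p \<in> P" "g = u + p" using y_sum \<open>g \<in> G\<close> by blast
  ultimately show ?thesis by (metis add.commute)
qed

lemma pairing_nondegenerate:
  assumes "x \<in> X" "x \<noteq> 0"
  shows "\<exists>p\<in>P. pairing p x \<noteq> 0"
proof (rule ccontr)
  assume "\<not> (\<exists>p\<in>P. pairing p x \<noteq> 0)"
  then have "phi (br x p) = 0" if "p \<in> P" for p
    using that phi_neg[OF br_in_P_left[OF that, of x]] br_antisym[of x p] by (simp add: pairing_def)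
  then have "x \<in> G" by (simp add: whittaker_annihilator_def)
  then show False using X_inter_G assms by blast
qed

lemma whittaker_word_Y: "set v \<subseteq> Y \<Longrightarrow> whittaker_word v"
proof (induction v)
  case Nil
  show ?case
    unfolding whittaker_word_def using fword_P_last[of _ "[]"] by simp
next
  case (Cons b v)
  then have wv: "whittaker_word v" and bG: "b \<in> G" using y_sub by auto
  show ?case unfolding whittaker_word_def
  proof
    fix p assume p: "p \<in> P"
    have "fword (p # b # v) \<approx>\<^sub>W (\<lambda>w. fword (b # p # v) w + fword (br p b # v) w)"
      using fword_swap_letters[of "[]" p b v] by simp
    also have "\<dots> \<approx>\<^sub>W (\<lambda>w. phi p * fword (b # v) w + phi (br p b) * fword v w)"
      using whittaker_word_prefix[OF wv p, of "[b]"] whittaker_word_prefix[OF wv br_in_P_left[OF p], of "[]"]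
      by (intro congW_add) auto
    finally show "fword (p # b # v) \<approx>\<^sub>W (\<lambda>w. phi p * fword (b # v) w)"
      using pairing_G[OF bG p] by (simp add: pairing_def)
  qed
qed

definition normal_words :: "'g set \<Rightarrow> nat \<Rightarrow> 'g list set" where
  "normal_words A n = {u @ v | u v. set u \<subseteq> A \<and> length u \<le> n \<and> set v \<subseteq> Y}"

lemma normal_wordsI: "set u \<subseteq> A \<Longrightarrow> length u \<le> n \<Longrightarrow> set v \<subseteq> Y \<Longrightarrow> u @ v \<in> normal_words A n"
  unfolding normal_words_def by blast

lemma normal_words_mono: "m \<le> n \<Longrightarrow> normal_words A m \<subseteq> normal_words A n"
  unfolding normal_words_def by fastforce

lemma Cons_normal_words:
  assumes "a \<in> A" "w \<in> normal_words A n"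
  shows "a # w \<in> normal_words A (Suc n)"
proof -
  obtain u v where "w = u @ v" "set u \<subseteq> A" "length u \<le> n" "set v \<subseteq> Y"
    using assms(2) unfolding normal_words_def by blast
  then show ?thesis using assms(1) normal_wordsI[of "a # u" A "Suc n" v] by simp
qed

lemma shorter_words_normal_words:
  "set u \<subseteq> A \<Longrightarrow> set v \<subseteq> Y \<Longrightarrow> shorter_words k u v \<subseteq> normal_words A (length u - k)"
  unfolding shorter_words_def normal_words_def by fastforce

lemma reduces_Cons_normal_word_from_Y:
  assumes u: "set u \<subseteq> X" and v: "set v \<subseteq> Y"
    and Y_case: "\<And>b. b \<in> Y \<Longrightarrow> reduces_to (normal_words X (Suc (length u))) (fword (b # u @ v))"
  shows "reduces_to (normal_words X (Suc (length u))) (fword (a # u @ v))"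
proof -
  obtain p b x where pbx: "p \<in> P" "b \<in> Y" "x \<in> X" "a = p + b + x"
    using decompose_P_Y_X by blast
  let ?N = "normal_words X (Suc (length u))"
  have split: "fword (a # u @ v) \<approx>\<^sub>W
      (\<lambda>w. (fword (p # u @ v) w + fword (b # u @ v) w) + fword (x # u @ v) w)"
    unfolding pbx(4)
    using congW_trans[OF fword_letter_add[of "[]" "p + b" x] congW_add[OF fword_letter_add[of "[]" p b] congW_refl]]
    by simp
  obtain R where R: "R \<in> word_span (shorter_words 1 u v)"
    "fword (p # u @ v) \<approx>\<^sub>W (\<lambda>w. phi p * fword (u @ v) w + R w)"
    using commute_P_letter_coarse[OF pbx(1) whittaker_word_Y[OF v]] by blast
  have "R \<in> word_span ?N"
    using word_span_mono[OF R(1) order_trans[OF shorter_words_normal_words[OF u v] normal_words_mono]]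
    by simp
  then have "reduces_to ?N (fword (p # u @ v))"
    using u v by (intro reduces_to_congW[OF R(2)] reduces_to_add reduces_to_scale reduces_to_fword
        reduces_to_word_span normal_wordsI) auto
  moreover have "reduces_to ?N (fword (x # u @ v))"
    using normal_wordsI[of "x # u" X "Suc (length u)" v] u v pbx(3) by (intro reduces_to_fword) simp
  ultimately show ?thesis
    using Y_case[OF pbx(2)] by (intro reduces_to_congW[OF split] reduces_to_add)
qed

lemma reduces_Cons_normal_word:
  assumes "set u \<subseteq> X" "set v \<subseteq> Y"
  shows "reduces_to (normal_words X (Suc (length u))) (fword (a # u @ v))"
  using assms(1)
proof (induction u arbitrary: a)
  case Nil
  show ?case
  proof (rule reduces_Cons_normal_word_from_Y)
    fix b assume "b \<in> Y"
    then show "reduces_to (normal_words X (Suc (length []))) (fword (b # [] @ v))"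
      using assms(2) normal_wordsI[of "[]" X 1 "b # v"] by (intro reduces_to_fword) simp
  qed (use assms(2) in auto)
next
  case (Cons x u)
  have x: "x \<in> X" and u: "set u \<subseteq> X" using Cons.prems by auto
  show ?case
  proof (rule reduces_Cons_normal_word_from_Y)
    fix b assume "b \<in> Y"
    let ?N = "normal_words X (Suc (length (x # u)))"
    have swap: "fword (b # (x # u) @ v) \<approx>\<^sub>W (\<lambda>w. fword (x # b # u @ v) w + fword (br b x # u @ v) w)"
      using fword_swap_letters[of "[]" b x "u @ v"] by simp
    have "reduces_to ?N (fmul (fword [x]) (fword (b # u @ v)))"
      using Cons.IH[OF u] by (rule reduces_to_fmul_fword) (simp add: Cons_normal_words x)
    moreover have "reduces_to ?N (fword (br b x # u @ v))"
      using Cons.IH[OF u] normal_words_mono by (rule reduces_to_mono) simp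
    ultimately show "reduces_to ?N (fword (b # (x # u) @ v))"
      by (intro reduces_to_congW[OF swap] reduces_to_add) (simp_all add: fmul_fword_fword)
  qed (use Cons.prems assms(2) in auto)
qed

lemma fword_reduces_to_normal_words: "reduces_to (normal_words X (length w)) (fword w)"
proof (induction w)
  case Nil
  show ?case using normal_wordsI[of "[]" X 0 "[]"] by (intro reduces_to_fword) simp
next
  case (Cons a w)
  have "reduces_to {[a] @ z | z. z \<in> normal_words X (length w)} (fmul (fword [a]) (fword w))"
    using Cons.IH by (rule reduces_to_fmul_fword) blast
  then have "reduces_to (normal_words X (length (a # w))) (fmul (fword [a]) (fword w))"
  proof (rule reduces_to_trans)
    fix z assume "z \<in> {[a] @ z | z. z \<in> normal_words X (length w)}"
    then obtain u v where uv: "z = a # u @ v" "set u \<subseteq> X" "length u \<le> length w" "set v \<subseteq> Y"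
      unfolding normal_words_def by auto
    show "reduces_to (normal_words X (length (a # w))) (fword z)"
      using reduces_to_mono[OF reduces_Cons_normal_word[OF uv(2,4), of a] normal_words_mono[of "Suc (length u)"]] uv(1,3)
      by simp
  qed
  then show ?case by (simp add: fmul_fword_fword)
qed

lemma fin_supp_reduces_to_normal_words:
  assumes "fin_supp f"
  shows "\<exists>n. reduces_to (normal_words X n) f"
proof -
  let ?S = "{w. f w \<noteq> 0}"
  define n where "n = (\<Sum>w\<in>?S. length w)"
  have "f \<in> word_span ?S" using assms by (simp add: word_span_def)
  then have "reduces_to ?S f" by (rule reduces_to_word_span)
  then have "reduces_to (normal_words X n) f"
  proof (rule reduces_to_trans)
    fix u assume "u \<in> ?S"
    then have "length u \<le> n"
      unfolding n_def using assms by (intro member_le_sum) (auto simp: fin_supp_def)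
    then show "reduces_to (normal_words X n) (fword u)"
      using fword_reduces_to_normal_words normal_words_mono by (meson reduces_to_mono)
  qed
  then show ?thesis by blast
qed

section \<open>The Euler operator\<close>

definition dual_system :: "('g \<times> 'g) set \<Rightarrow> bool" where
  "dual_system ds \<longleftrightarrow> finite ds \<and> (\<forall>d\<in>ds. fst d \<in> X \<and> snd d \<in> P) \<and>
     (\<forall>d\<in>ds. \<forall>d'\<in>ds. pairing (snd d) (fst d') = (if d = d' then 1 else 0))"

definition expansion :: "('g \<times> 'g) set \<Rightarrow> 'g \<Rightarrow> 'g" where
  "expansion ds a = (\<Sum>d\<in>ds. smul (pairing (snd d) a) (fst d))"

lemma dual_system_sum_delta:
  assumes "dual_system ds" "d0 \<in> ds"
  shows "(\<Sum>d\<in>ds. c d * pairing (snd d) (fst d0)) = c d0"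
    and "(\<Sum>d\<in>ds. c d * pairing (snd d0) (fst d)) = c d0"
proof -
  have fin: "finite ds" and delta: "\<And>d. d \<in> ds \<Longrightarrow> pairing (snd d) (fst d0) = (if d = d0 then 1 else 0)"
      "\<And>d. d \<in> ds \<Longrightarrow> pairing (snd d0) (fst d) = (if d = d0 then 1 else 0)"
    using assms unfolding dual_system_def by auto
  have "(\<Sum>d\<in>ds. c d * pairing (snd d) (fst d0)) = (\<Sum>d\<in>ds. if d = d0 then c d else 0)"
    "(\<Sum>d\<in>ds. c d * pairing (snd d0) (fst d)) = (\<Sum>d\<in>ds. if d = d0 then c d else 0)"
    by (auto intro: sum.cong simp: delta)
  then show "(\<Sum>d\<in>ds. c d * pairing (snd d) (fst d0)) = c d0"
    "(\<Sum>d\<in>ds. c d * pairing (snd d0) (fst d)) = c d0"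
    using fin assms(2) by (simp_all add: sum.delta')
qed

lemma pairing_expansion:
  assumes "q \<in> P" "dual_system ds"
  shows "pairing q (expansion ds a) = (\<Sum>d\<in>ds. pairing (snd d) a * pairing q (fst d))"
  unfolding expansion_def using assms by (simp add: pairing_sum_right pairing_scale_right)

lemma expansion_in_X: "dual_system ds \<Longrightarrow> expansion ds a \<in> X"
  unfolding expansion_def dual_system_def using X_subspace
  by (intro V.subspace_sum V.subspace_scale) auto

lemma expansion_insert:
  "dual_system ds \<Longrightarrow> d \<notin> ds \<Longrightarrow> expansion (insert d ds) a = smul (pairing (snd d) a) (fst d) + expansion ds a"
  unfolding expansion_def dual_system_def by simp

text \<open>One step of Gram--Schmidt: make \<open>a\<close> reproducible by adjoining its residual \<open>r\<close> together
  with a \<open>q \<in> P\<close> pairing to \<open>1\<close> with \<open>r\<close> and to \<open>0\<close> with the old vectors.\<close>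
lemma dual_system_extend:
  assumes ds: "dual_system ds" and a: "a \<in> X"
  shows "\<exists>ds'. dual_system ds' \<and> expansion ds' a = a \<and> (\<forall>b. expansion ds b = b \<longrightarrow> expansion ds' b = b)"
proof (cases "expansion ds a = a")
  case True
  then show ?thesis using ds by blast
next
  case False
  have fin: "finite ds" and ds_XP: "\<And>d. d \<in> ds \<Longrightarrow> fst d \<in> X \<and> snd d \<in> P"
    using ds unfolding dual_system_def by auto
  define r where "r = a - expansion ds a"
  have r: "r \<in> X" "r \<noteq> 0"
    unfolding r_def using False a X_subspace expansion_in_X[OF ds] by (auto intro: V.subspace_diff)
  have pairing_r: "pairing (snd d) r = 0" if "d \<in> ds" for d
    using that ds_XP[OF that] dual_system_sum_delta(2)[OF ds that]
    by (simp add: r_def pairing_diff_right pairing_expansion[OF _ ds])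
  obtain p0 where p0: "p0 \<in> P" "pairing p0 r \<noteq> 0" using pairing_nondegenerate[OF r] by blast
  define q1 where "q1 = smul (1 / pairing p0 r) p0"
  define q where "q = q1 - (\<Sum>d\<in>ds. smul (pairing q1 (fst d)) (snd d))"
  have q1: "q1 \<in> P" "pairing q1 r = 1"
    unfolding q1_def using p0 by (simp_all add: P_scale pairing_scale_left)
  have q: "q \<in> P" unfolding q_def using q1 ds_XP by (intro P_diff P_sum P_scale) auto
  have pairing_q: "pairing q b = pairing q1 b - (\<Sum>d\<in>ds. pairing q1 (fst d) * pairing (snd d) b)" for b
    unfolding q_def using q1 ds_XP by (simp add: pairing_diff_left P_sum P_scale pairing_sum_left pairing_scale_left)
  have q_ds: "pairing q (fst d) = 0" if "d \<in> ds" for d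
    using dual_system_sum_delta(1)[OF ds that] by (simp add: pairing_q)
  have qr: "pairing q r = 1" using q1 pairing_r by (simp add: pairing_q)
  have new: "(r, q) \<notin> ds" using q_ds qr by force
  define ds' where "ds' = insert (r, q) ds"
  have "dual_system ds'"
    using ds r q qr q_ds pairing_r new unfolding ds'_def dual_system_def by auto
  moreover have expansion_ds': "expansion ds' b = smul (pairing q b) r + expansion ds b" for b
    unfolding ds'_def using expansion_insert[OF ds new] by simp
  moreover have q_expansion: "pairing q (expansion ds b) = 0" for b
    using q_ds by (simp add: pairing_expansion[OF q ds])
  moreover have "expansion ds' b = b" if "expansion ds b = b" for b
    using expansion_ds' q_expansion[of b] that by simp
  moreover have "pairing q a = 1"
    using qr pairing_add_right[OF q, of r "expansion ds a"] q_expansion[of a] by (simp add: r_def)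
  ultimately show ?thesis
    by (intro exI[of _ ds']) (auto simp: r_def)
qed

lemma dual_system_exists: "finite A \<Longrightarrow> A \<subseteq> X \<Longrightarrow> \<exists>ds. dual_system ds \<and> (\<forall>a\<in>A. expansion ds a = a)"
proof (induction A rule: finite_induct)
  case empty
  show ?case by (intro exI[of _ "{}"]) (simp add: dual_system_def)
next
  case (insert a A)
  then obtain ds where "dual_system ds" "\<forall>b\<in>A. expansion ds b = b" by auto
  with dual_system_extend[of ds a] insert.prems show ?case by fastforce
qed

lemma move_letter_front:
  assumes "x \<in> X" "set pre \<subseteq> X" "set post \<subseteq> X" "set v \<subseteq> Y"
  shows "reduces_to (normal_words X (length pre + length post))
     (\<lambda>w. fword (x # pre @ post @ v) w - fword (pre @ x # post @ v) w)"
  using assms(2)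
proof (induction pre)
  case Nil
  show ?case by (rule reduces_to_ext[OF reduces_to_zero]) simp
next
  case (Cons b pre)
  have b: "b \<in> X" and pre: "set pre \<subseteq> X" using Cons.prems by auto
  let ?N = "normal_words X (length (b # pre) + length post)"
  have swap: "fword (x # b # pre @ post @ v) \<approx>\<^sub>W
      (\<lambda>w. fword (b # x # pre @ post @ v) w + fword (br x b # pre @ post @ v) w)"
    using fword_swap_letters[of "[]" x b "pre @ post @ v"] by simp
  have "reduces_to ?N (fmul (fword [b]) (\<lambda>w. fword (x # pre @ post @ v) w - fword (pre @ x # post @ v) w))"
    using Cons.IH[OF pre] by (rule reduces_to_fmul_fword) (simp add: Cons_normal_words b)
  moreover have "reduces_to ?N (fword (br x b # (pre @ post) @ v))"
    using reduces_Cons_normal_word[of "pre @ post" v "br x b"] pre assms(3,4) by simp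
  ultimately have "reduces_to ?N (\<lambda>w. (fword (b # x # pre @ post @ v) w + fword (br x b # pre @ post @ v) w)
      - fword (b # pre @ x # post @ v) w)"
    by (rule reduces_to_ext[OF reduces_to_add]) (simp add: fmul_diff_right fmul_fword_fword)
  then have "reduces_to ?N (\<lambda>w. fword (x # b # pre @ post @ v) w - fword (b # pre @ x # post @ v) w)"
    by (rule reduces_to_congW[OF congW_diff[OF swap congW_refl]])
  then show ?case by simp
qed

text \<open>Up to lower \<open>X\<close>-degree, \<open>x\<^sub>d (p\<^sub>d - \<phi>(p\<^sub>d))\<close> replaces one letter \<open>u ! l\<close> of \<open>u\<close> by
  \<open>\<phi>([p\<^sub>d, u ! l]) x\<^sub>d\<close> in front (\<open>commute_P_letter\<close>), and summing over \<open>d\<close> gives back \<open>u ! l\<close>.\<close>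
lemma euler_operator_fword:
  assumes ds: "dual_system ds" and u: "set u \<subseteq> X" "\<forall>a\<in>set u. expansion ds a = a"
    and v: "set v \<subseteq> Y"
  shows "reduces_to (normal_words X (length u - 1))
     (\<lambda>w. euler_operator ds (fword (u @ v)) w - (\<Sum>l<length u. fword (u ! l # remove_nth l u @ v) w))"
proof -
  have fin: "finite ds" and ds_XP: "\<And>d. d \<in> ds \<Longrightarrow> fst d \<in> X \<and> snd d \<in> P"
    using ds by (auto simp: dual_system_def)
  let ?N = "normal_words X (length u - 1)"
  let ?rest = "\<lambda>l. remove_nth l u @ v"
  have "\<forall>d\<in>ds. \<exists>R. R \<in> word_span (shorter_words 2 u v) \<and>
      fmul (fgen (fst d)) (whittaker_defect (snd d) (fword (u @ v))) \<approx>\<^sub>W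
      (\<lambda>w. (\<Sum>l<length u. pairing (snd d) (u ! l) * fword (fst d # ?rest l) w) + fmul (fword [fst d]) R w)"
    using fgen_whittaker_defect_fword[OF _ whittaker_word_Y[OF v]] ds_XP by blast
  from bchoice[OF this] obtain R where R: "\<And>d. d \<in> ds \<Longrightarrow> R d \<in> word_span (shorter_words 2 u v)"
    "\<And>d. d \<in> ds \<Longrightarrow> fmul (fgen (fst d)) (whittaker_defect (snd d) (fword (u @ v))) \<approx>\<^sub>W
      (\<lambda>w. (\<Sum>l<length u. pairing (snd d) (u ! l) * fword (fst d # ?rest l) w) + fmul (fword [fst d]) (R d) w)"
    by blast+
  have lincomb: "(\<lambda>w. \<Sum>d\<in>ds. pairing (snd d) (u ! l) * fword (fst d # ?rest l) w) \<approx>\<^sub>W fword (u ! l # ?rest l)"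
    if "l < length u" for l
  proof -
    have "expansion ds (u ! l) = u ! l" using u(2) nth_mem[OF that] by blast
    then show ?thesis
      using congW_sym[OF fword_letter_lincomb[OF fin, of "[]" "\<lambda>d. pairing (snd d) (u ! l)" fst "?rest l"]]
      by (simp add: expansion_def)
  qed
  define H where "H = (\<lambda>w. \<Sum>d\<in>ds. fmul (fword [fst d]) (R d) w)"
  have "H \<in> word_span ?N"
    unfolding H_def
  proof (intro word_span_sum fin word_span_fmul_fword[OF R(1)])
    fix d z assume "d \<in> ds" "z \<in> shorter_words 2 u v"
    then show "[fst d] @ z \<in> ?N"
      using ds_XP u(1) v normal_wordsI[of "fst d # s" X "length u - 1" v for s]
      unfolding shorter_words_def by auto
  qed
  then have H: "reduces_to ?N (\<lambda>w. ((\<Sum>l<length u. fword (u ! l # ?rest l) w) + H w)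
      - (\<Sum>l<length u. fword (u ! l # ?rest l) w))"
    by (rule reduces_to_ext[OF reduces_to_word_span]) simp
  have "euler_operator ds (fword (u @ v)) \<approx>\<^sub>W (\<lambda>w. \<Sum>d\<in>ds.
      (\<Sum>l<length u. pairing (snd d) (u ! l) * fword (fst d # ?rest l) w) + fmul (fword [fst d]) (R d) w)"
    unfolding euler_operator_def by (intro congW_sum R(2))
  also have "\<dots> = (\<lambda>w. (\<Sum>l<length u. \<Sum>d\<in>ds. pairing (snd d) (u ! l) * fword (fst d # ?rest l) w) + H w)"
    by (rule ext) (simp add: H_def sum.distrib sum.swap[of _ ds])
  also have "\<dots> \<approx>\<^sub>W (\<lambda>w. (\<Sum>l<length u. fword (u ! l # ?rest l) w) + H w)"
    by (intro congW_add congW_sum lincomb congW_refl) simp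
  finally show ?thesis by (rule reduces_to_congW[OF congW_diff[OF _ congW_refl] H])
qed

lemma euler_operator_normal_word:
  assumes ds: "dual_system ds" and u: "set u \<subseteq> X" "\<forall>a\<in>set u. expansion ds a = a"
    and v: "set v \<subseteq> Y"
  shows "reduces_to (normal_words X (length u - 1))
     (\<lambda>w. of_nat (length u) * fword (u @ v) w - euler_operator ds (fword (u @ v)) w)"
proof -
  let ?N = "normal_words X (length u - 1)"
  have "reduces_to ?N (\<lambda>w. fword (u ! l # remove_nth l u @ v) w - fword (u @ v) w)"
    if l: "l < length u" for l
  proof -
    have eq: "take l u @ u ! l # drop (Suc l) u @ v = u @ v"
      by (metis append.assoc append_Cons id_take_nth_drop[OF l])
    have len: "length (take l u) + length (drop (Suc l) u) = length u - 1" using l by simp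
    have "u ! l \<in> X" "set (take l u) \<subseteq> X" "set (drop (Suc l) u) \<subseteq> X"
      using l u(1) set_take_subset[of l u] set_drop_subset[of "Suc l" u] by auto
    from move_letter_front[OF this v] show ?thesis unfolding eq len by simp
  qed
  then have "reduces_to ?N (\<lambda>w. \<Sum>l<length u. fword (u ! l # remove_nth l u @ v) w - fword (u @ v) w)"
    by (intro reduces_to_sum) simp
  from reduces_to_diff[OF reduces_to_scale[OF euler_operator_fword[OF assms], of "-1"] this]
  show ?thesis by (rule reduces_to_ext) (simp add: sum_subtractf algebra_simps)
qed

lemma euler_operator_word_span:
  assumes ds: "dual_system ds"
    and h: "h \<in> word_span (normal_words {a \<in> X. expansion ds a = a} n)"
  shows "reduces_to (normal_words X (n - 1)) (\<lambda>w. of_nat n * h w - euler_operator ds h w)"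
  using h
proof (induction rule: word_span_induct)
  case zero
  show ?case by (rule reduces_to_ext[OF reduces_to_zero]) (simp add: euler_operator_zero)
next
  case (add f g)
  from reduces_to_add[OF add] show ?case
    by (rule reduces_to_ext) (simp add: euler_operator_add algebra_simps)
next
  case (scale f c)
  from reduces_to_scale[OF scale, of c] show ?case
    by (rule reduces_to_ext) (simp add: euler_operator_scale algebra_simps)
next
  case (word z)
  then obtain u v where z: "z = u @ v" "set u \<subseteq> X" "\<forall>a\<in>set u. expansion ds a = a"
      "length u \<le> n" "set v \<subseteq> Y"
    unfolding normal_words_def by blast
  have "normal_words X (length u - 1) \<subseteq> normal_words X (n - 1)"
    using z(4) by (intro normal_words_mono) simp
  then have e1: "reduces_to (normal_words X (n - 1))
      (\<lambda>w. of_nat (length u) * fword (u @ v) w - euler_operator ds (fword (u @ v)) w)"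
    by (rule reduces_to_mono[OF euler_operator_normal_word[OF ds z(2,3,5)]])
  have e2: "reduces_to (normal_words X (n - 1)) (\<lambda>w. of_nat (n - length u) * fword (u @ v) w)"
  proof (cases "length u = n")
    case True
    then show ?thesis by (intro reduces_to_ext[OF reduces_to_zero]) simp
  next
    case False
    then have "u @ v \<in> normal_words X (n - 1)" using z by (intro normal_wordsI) auto
    then show ?thesis by (intro reduces_to_scale reduces_to_fword)
  qed
  from reduces_to_add[OF e2 e1] have "reduces_to (normal_words X (n - 1))
      (\<lambda>w. of_nat n * fword (u @ v) w - euler_operator ds (fword (u @ v)) w)"
    by (rule reduces_to_ext) (simp add: z(4) of_nat_diff algebra_simps)
  then show ?case using z(1) by simp
qed

text \<open>The Euler operator annihilates quasi-Whittaker vectors, so on them the multiplication by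
  the top \<open>X\<close>-degree \<open>n\<close> is absorbed by lower degrees.\<close>
lemma quasi_whittaker_degree_step:
  assumes wh: "\<forall>p\<in>P. whittaker_defect p f \<in> W"
    and f: "reduces_to (normal_words X n) f" and n: "0 < n"
  shows "reduces_to (normal_words X (n - 1)) f"
proof -
  obtain h where h: "h \<in> word_span (normal_words X n)" "f \<approx>\<^sub>W h"
    using f unfolding reduces_to_def by blast
  define A where "A = X \<inter> (\<Union>w\<in>{w. h w \<noteq> 0}. set w)"
  have "finite A" "A \<subseteq> X"
    unfolding A_def using h(1) by (auto simp: word_span_def fin_supp_def)
  then obtain ds where ds: "dual_system ds" "\<forall>a\<in>A. expansion ds a = a"
    using dual_system_exists by blast
  have "h \<in> word_span (normal_words {a \<in> X. expansion ds a = a} n)"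
    unfolding word_span_def
  proof (intro CollectI conjI allI impI)
    show "fin_supp h" using h(1) by (simp add: word_span_def)
    fix w assume hw: "h w \<noteq> 0"
    then have "w \<in> normal_words X n" using h(1) by (simp add: word_span_def)
    then obtain u v where uv: "w = u @ v" "set u \<subseteq> X" "length u \<le> n" "set v \<subseteq> Y"
      unfolding normal_words_def by blast
    then have "set u \<subseteq> A" unfolding A_def using hw by auto
    then have "set u \<subseteq> {a \<in> X. expansion ds a = a}" using ds(2) uv(2) by auto
    then show "w \<in> normal_words {a \<in> X. expansion ds a = a} n" using uv normal_wordsI by simp
  qed
  then have euler: "reduces_to (normal_words X (n - 1)) (\<lambda>w. of_nat n * h w - euler_operator ds h w)"
    by (rule euler_operator_word_span[OF ds(1)])
  have "euler_operator ds f \<in> W" using ds(1) wh by (intro euler_operator_in_W) (auto simp: dual_system_def)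
  then have "euler_operator ds h \<approx>\<^sub>W (\<lambda>w. 0)"
    using euler_operator_congW[OF congW_sym[OF h(2)], of ds] by (simp add: congW_zero_iff[symmetric] congW_trans)
  from congW_diff[OF congW_refl[of "\<lambda>w. of_nat n * h w"] congW_sym[OF this]]
  have "(\<lambda>w. of_nat n * h w) \<approx>\<^sub>W (\<lambda>w. of_nat n * h w - euler_operator ds h w)" by simp
  from reduces_to_scale[OF reduces_to_congW[OF this euler], of "1 / of_nat n"]
  have "reduces_to (normal_words X (n - 1)) h" by (rule reduces_to_ext) (use n in simp)
  then show ?thesis by (rule reduces_to_congW[OF h(2)])
qed

lemma quasi_whittaker_reduces_to_Y_words:
  assumes "\<forall>p\<in>P. whittaker_defect p f \<in> W" "fin_supp f"
  shows "reduces_to (normal_words X 0) f"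
proof -
  obtain n where "reduces_to (normal_words X n) f"
    using fin_supp_reduces_to_normal_words[OF assms(2)] by blast
  then show ?thesis
  proof (induction n)
    case (Suc n)
    then show ?case using quasi_whittaker_degree_step[OF assms(1) Suc.prems] by simp
  qed
qed

section \<open>Ordered monomials\<close>

definition Y_words :: "nat \<Rightarrow> 'g list set" where
  "Y_words k = {v. set v \<subseteq> Y \<and> length v \<le> k}"

definition ordered_y_words :: "nat \<Rightarrow> 'g list set" where
  "ordered_y_words n = {map y js | js. sorted js \<and> set js \<subseteq> J \<and> length js \<le> n}"

definition ordered_y_words_from :: "'j \<Rightarrow> nat \<Rightarrow> 'g list set" where
  "ordered_y_words_from b k = {map y js | js. sorted js \<and> set js \<subseteq> J \<and> length js = k \<and> (\<forall>t\<in>set js. b \<le> t)}"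

lemma map_y_Y: "set js \<subseteq> J \<Longrightarrow> set (map y js) \<subseteq> Y"
  using y_in_Y by auto

lemma ordered_y_words_mono: "m \<le> n \<Longrightarrow> ordered_y_words m \<subseteq> ordered_y_words n"
  unfolding ordered_y_words_def by force

lemma br_Y_reduces_to_Y_words:
  assumes "a \<in> Y" "b \<in> Y" "set v \<subseteq> Y"
  shows "reduces_to (Y_words (Suc (length v))) (fword (br a b # v))"
proof -
  have "br a b \<in> G" using br_in_G assms(1,2) y_sub by blast
  then obtain c p where cp: "c \<in> Y" "p \<in> P" "br a b = c + p" using y_sum by blast
  have split: "fword (br a b # v) \<approx>\<^sub>W (\<lambda>w. fword (c # v) w + phi p * fword v w)"
    unfolding cp(3)
    using congW_trans[OF fword_letter_add[of "[]" c p v]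
        congW_add[OF congW_refl whittaker_word_prefix[OF whittaker_word_Y[OF assms(3)] cp(2), of "[]"]]]
    by simp
  have "c # v \<in> Y_words (Suc (length v))" "v \<in> Y_words (Suc (length v))"
    using cp(1) assms(3) by (auto simp: Y_words_def)
  then show ?thesis
    by (intro reduces_to_congW[OF split] reduces_to_add reduces_to_scale reduces_to_fword)
qed

lemma Cons_ordered_y_words_from:
  assumes "i \<in> J" "b \<le> i" "v \<in> ordered_y_words_from i k"
  shows "y i # v \<in> ordered_y_words_from b (Suc k)"
proof -
  obtain js where "v = map y js" "sorted js" "set js \<subseteq> J" "length js = k" "\<forall>t\<in>set js. i \<le> t"
    using assms(3) unfolding ordered_y_words_from_def by blast
  then show ?thesis
    unfolding ordered_y_words_from_def using assms(1,2) by (intro CollectI exI[of _ "i # js"]) (auto intro: order_trans)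
qed

text \<open>Insertion sort: \<open>y\<^sub>j\<close> moves right past smaller letters; each swap leaves a bracket term,
  which is a shorter word in \<open>Y\<close>.\<close>
lemma insert_y_letter:
  assumes "j \<in> J" "sorted ts" "set ts \<subseteq> J" "b \<le> j" "\<forall>t\<in>set ts. b \<le> t"
  shows "reduces_to (ordered_y_words_from b (Suc (length ts)) \<union> Y_words (length ts)) (fword (y j # map y ts))"
  using assms(2-5)
proof (induction ts arbitrary: b)
  case Nil
  show ?case
    using assms(1) Nil by (intro reduces_to_fword) (auto simp: ordered_y_words_from_def intro!: exI[of _ "[j]"])
next
  case (Cons i ts)
  have i: "i \<in> J" "b \<le> i" "\<forall>t\<in>set ts. i \<le> t" "sorted ts" "set ts \<subseteq> J"
    using Cons.prems by auto
  let ?T = "ordered_y_words_from b (Suc (length (i # ts))) \<union> Y_words (length (i # ts))"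
  show ?case
  proof (cases "j \<le> i")
    case True
    have "y j # map y (i # ts) \<in> ordered_y_words_from b (Suc (length (i # ts)))"
      unfolding ordered_y_words_from_def using True Cons.prems assms(1)
      by (intro CollectI exI[of _ "j # i # ts"]) (auto intro: order_trans)
    then show ?thesis by (intro reduces_to_fword) simp
  next
    case False
    have swap: "fword (y j # y i # map y ts) \<approx>\<^sub>W
        (\<lambda>w. fword (y i # y j # map y ts) w + fword (br (y j) (y i) # map y ts) w)"
      using fword_swap_letters[of "[]" "y j" "y i" "map y ts"] by simp
    have "reduces_to (ordered_y_words_from i (Suc (length ts)) \<union> Y_words (length ts)) (fword (y j # map y ts))"
      using Cons.IH[of i] False i by simp
    then have "reduces_to ?T (fmul (fword [y i]) (fword (y j # map y ts)))"
      by (rule reduces_to_fmul_fword)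
         (use Cons_ordered_y_words_from[OF i(1,2)] y_in_Y[OF i(1)] in \<open>auto simp: Y_words_def\<close>)
    moreover have "reduces_to ?T (fword (br (y j) (y i) # map y ts))"
      using br_Y_reduces_to_Y_words[OF y_in_Y[OF assms(1)] y_in_Y[OF i(1)] map_y_Y[OF i(5)]]
      by (rule reduces_to_mono) auto
    ultimately have "reduces_to ?T (fword (y j # y i # map y ts))"
      by (intro reduces_to_congW[OF swap] reduces_to_add) (simp_all add: fmul_fword_fword)
    then show ?thesis by simp
  qed
qed

lemma insert_y_letter_ordered:
  assumes "j \<in> J" "sorted ts" "set ts \<subseteq> J" "length ts \<le> n"
    and shorter: "\<And>v. set v \<subseteq> Y \<Longrightarrow> length v \<le> n \<Longrightarrow> reduces_to (ordered_y_words n) (fword v)"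
  shows "reduces_to (ordered_y_words (Suc n)) (fword (y j # map y ts))"
proof -
  define b where "b = (case ts of [] \<Rightarrow> j | t # _ \<Rightarrow> min j t)"
  have b: "b \<le> j" "\<forall>t\<in>set ts. b \<le> t"
    using assms(2) by (auto simp: b_def split: list.splits intro: min.coboundedI2 order_trans)
  from insert_y_letter[OF assms(1-3) b] show ?thesis
  proof (rule reduces_to_trans)
    fix u assume "u \<in> ordered_y_words_from b (Suc (length ts)) \<union> Y_words (length ts)"
    then show "reduces_to (ordered_y_words (Suc n)) (fword u)"
    proof
      assume "u \<in> ordered_y_words_from b (Suc (length ts))"
      then have "u \<in> ordered_y_words (Suc n)"
        using assms(4) unfolding ordered_y_words_from_def ordered_y_words_def by auto
      then show ?thesis by (rule reduces_to_fword)
    next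
      assume "u \<in> Y_words (length ts)"
      then have "reduces_to (ordered_y_words n) (fword u)" using shorter assms(4) by (auto simp: Y_words_def)
      then show ?thesis by (rule reduces_to_mono) (rule ordered_y_words_mono, simp)
    qed
  qed
qed

lemma Y_word_reduces_to_ordered: "set v \<subseteq> Y \<Longrightarrow> length v \<le> n \<Longrightarrow> reduces_to (ordered_y_words n) (fword v)"
proof (induction n arbitrary: v)
  case 0
  then show ?case by (intro reduces_to_fword) (auto simp: ordered_y_words_def intro!: exI[of _ "[]"])
next
  case (Suc n)
  show ?case
  proof (cases v)
    case Nil
    then show ?thesis by (intro reduces_to_fword) (auto simp: ordered_y_words_def intro!: exI[of _ "[]"])
  next
    case (Cons a v')
    have a: "a \<in> Y" and v': "set v' \<subseteq> Y" "length v' \<le> n" using Suc.prems Cons by auto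
    have "reduces_to (ordered_y_words (Suc n)) (fword ([] @ a # v'))"
    proof (rule reduces_to_letter_span[OF a])
      fix b assume "b \<in> y ` J"
      then obtain j where j: "j \<in> J" "b = y j" by blast
      have "reduces_to {[y j] @ z | z. z \<in> ordered_y_words n} (fmul (fword [y j]) (fword v'))"
        using Suc.IH[OF v'] by (rule reduces_to_fmul_fword) blast
      then have "reduces_to (ordered_y_words (Suc n)) (fmul (fword [y j]) (fword v'))"
      proof (rule reduces_to_trans)
        fix z assume "z \<in> {[y j] @ z | z. z \<in> ordered_y_words n}"
        then obtain ts where ts: "z = y j # map y ts" "sorted ts" "set ts \<subseteq> J" "length ts \<le> n"
          unfolding ordered_y_words_def by auto
        show "reduces_to (ordered_y_words (Suc n)) (fword z)"
          unfolding ts(1) by (rule insert_y_letter_ordered[OF j(1) ts(2-4) Suc.IH])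
      qed
      then show "reduces_to (ordered_y_words (Suc n)) (fword ([] @ b # v'))"
        using j(2) by (simp add: fmul_fword_fword)
    qed
    then show ?thesis using Cons by simp
  qed
qed

lemma word_span_ordered_y_words:
  assumes h: "h \<in> word_span (\<Union>n. ordered_y_words n)"
  shows "h \<in> ordered_monomial_span y J"
proof -
  define S where "S = {js. sorted js \<and> set js \<subseteq> J \<and> h (map y js) \<noteq> 0}"
  have inj: "inj_on (map y) {js. set js \<subseteq> J}"
    by (rule inj_on_mapI) (rule inj_on_subset[OF y_inj], auto)
  have fin: "finite S"
  proof (rule finite_subset)
    show "S \<subseteq> map y -` {w. h w \<noteq> 0} \<inter> {js. set js \<subseteq> J}" unfolding S_def by auto
    show "finite (map y -` {w. h w \<noteq> 0} \<inter> {js. set js \<subseteq> J})"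
      using h inj by (intro finite_vimage_IntI) (auto simp: word_span_def fin_supp_def)
  qed
  have eq: "h w = (\<Sum>js\<in>S. h (map y js) * fword (map y js) w)" for w
  proof (cases "h w = 0")
    case True
    have "(\<Sum>js\<in>S. h (map y js) * fword (map y js) w) = 0"
      using True by (intro sum.neutral) (auto simp: fword_def)
    then show ?thesis using True by simp
  next
    case False
    then obtain js0 where js0: "w = map y js0" "sorted js0" "set js0 \<subseteq> J"
      using h unfolding word_span_def ordered_y_words_def by blast
    have "(\<Sum>js\<in>S. h (map y js) * fword (map y js) w) = (\<Sum>js\<in>S. if js = js0 then h w else 0)"
    proof (rule sum.cong)
      fix js assume "js \<in> S"
      then have "map y js = map y js0 \<longleftrightarrow> js = js0" using inj js0(3) by (auto simp: S_def dest: inj_onD)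
      then show "h (map y js) * fword (map y js) w = (if js = js0 then h w else 0)"
        using js0(1) by (auto simp: fword_def)
    qed simp
    also have "\<dots> = h w" using \<open>finite S\<close> js0 False by (simp add: sum.delta' S_def)
    finally show ?thesis by simp
  qed
  show ?thesis
    unfolding ordered_monomial_span_def
    by (intro CollectI exI[of _ S] exI[of _ "\<lambda>js. h (map y js)"] conjI fin ext eq) (auto simp: S_def)
qed

lemma quasi_whittaker_ordered_monomial:
  assumes "fin_supp f" "quasi_whittaker_rep smul br P phi f"
  shows "\<exists>q\<in>ordered_monomial_span y J. f \<approx>\<^sub>W q"
proof -
  have "reduces_to (normal_words X 0) f"
    using assms quasi_whittaker_reduces_to_Y_words by (simp add: quasi_whittaker_rep_iff)
  then have "reduces_to (\<Union>n. ordered_y_words n) f"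
  proof (rule reduces_to_trans)
    fix u assume "u \<in> normal_words X 0"
    then have "set u \<subseteq> Y" unfolding normal_words_def by auto
    from Y_word_reduces_to_ordered[OF this order_refl] show "reduces_to (\<Union>n. ordered_y_words n) (fword u)"
      by (rule reduces_to_mono) blast
  qed
  then show ?thesis using word_span_ordered_y_words unfolding reduces_to_def by blast
qed

lemma ordered_monomial_quasi_whittaker:
  assumes "q \<in> ordered_monomial_span y J" "f \<approx>\<^sub>W q"
  shows "quasi_whittaker_rep smul br P phi f"
  unfolding quasi_whittaker_rep_iff
proof
  fix p assume p: "p \<in> P"
  obtain S c where S: "finite S" "\<forall>js\<in>S. sorted js \<and> set js \<subseteq> J"
    and q: "q = (\<lambda>w. \<Sum>js\<in>S. c js * fword (map y js) w)"
    using assms(1) unfolding ordered_monomial_span_def by blast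
  have "whittaker_defect p (fword (map y js)) \<in> W" if "js \<in> S" for js
    using whittaker_word_Y[OF map_y_Y] S(2) that p
    unfolding whittaker_word_def congW_def whittaker_defect_fword by blast
  then have "whittaker_defect p q \<in> W"
    unfolding q whittaker_defect_sum whittaker_defect_scale by (intro W_sum W_ideal.scale)
  with whittaker_defect_congW[OF assms(2), of p]
  have "(\<lambda>w. (whittaker_defect p f w - whittaker_defect p q w) + whittaker_defect p q w) \<in> W"
    unfolding congW_def by (rule W_ideal.add)
  then show "whittaker_defect p f \<in> W" by (rule W_ext) simp
qed

end

text \<open>Only spanning is claimed.\<close>
theorem theorem3p1:
  fixes smul :: "complex \<Rightarrow> 'g::ab_group_add \<Rightarrow> 'g"
    and br :: "'g \<Rightarrow> 'g \<Rightarrow> 'g"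
    and P :: "'g set"
    and phi :: "'g \<Rightarrow> complex"
    and y :: "'j::linorder \<Rightarrow> 'g"
    and J :: "'j set"
  assumes lie: "lie_algebra smul br"
    and nonss: "\<not> semisimple smul br"
    and ideal: "lie_ideal smul br P"
    and nonperf: "\<not> perfect smul br P"
    and hom: "lie_hom_to_C smul br P phi"
    and y_inj: "inj_on y J"
    and y_indep: "module.independent smul (y ` J)"
    and y_sub: "module.span smul (y ` J) \<subseteq> whittaker_annihilator br P phi"
    and y_cap: "module.span smul (y ` J) \<inter> P = {0}"
    and y_sum: "\<forall>g \<in> whittaker_annihilator br P phi.
                  \<exists>u \<in> module.span smul (y ` J). \<exists>p \<in> P. g = u + p"
  shows "\<forall>f. fin_supp f \<longrightarrow>
           (quasi_whittaker_rep smul br P phi f \<longleftrightarrow>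
            (\<exists>q \<in> ordered_monomial_span y J. (\<lambda>w. f w - q w) \<in> W_ideal smul br P phi))"
proof -
  interpret whittaker_complement smul br P phi y J
    by unfold_locales (use lie ideal hom y_inj y_sub y_sum in auto)
  show ?thesis
    using quasi_whittaker_ordered_monomial ordered_monomial_quasi_whittaker
    unfolding congW_def by blast
qed

end
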